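(* Let $\mathbf{F}=F(\mathcal{R}[t,t^{-1}])$ and expand each $g\in\mathbf{F}$ as $g=\sum_{i\ge0}(t-1)^iA_i$ with $A_i\in M_2(\mathcal{R})$. (i) $g\in\mathbf{F}''$ if and only if $A_0=I$, i.e. $g=I+(t-1)A_1+(t-1)^2A_2+\cdots$. (ii) If $k>1$, $d=2^{k-2}$ and $g\in\mathbf{F}^{(k)}$, the $k$-th derived subgroup of $\mathbf{F}$, then $g=I+\sum_{i\ge d}(t-1)^iA_i$ (i.e. $A_0=I$ and $A_i=0$ for $1\le i<d$) and all entries of $A_i$ lie in $\Sigma^d$ for every $i\ge d$.
   Context: $\mathcal{R}=\mathbb{Z}[x,x^{-1},y,y^{-1}]$; $\Sigma$ is the augmentation ideal of $\mathcal{R}$ (kernel of $x,y\mapsto1$ to $\mathbb{Z}$). $F(\mathcal{R}[t,t^{-1}])$ is the subgroup of $GL_2(\mathcal{R}[t,t^{-1}])$ generated by $M_1=\begin{pmatrix}1&1-y\\0&x\end{pmatrix}$ and $M_2T=\begin{pmatrix}yt&0\\1-xt&1\end{pmatrix}$. Via $t=1+s$, $t^{-1}=\sum_{i\ge0}(-s)^i$, $\mathcal{R}[t,t^{-1}]$ embeds in $\mathcal{R}[[s]]$, giving each matrix over $\mathcal{R}[t,t^{-1}]$ a unique expansion $\sum_{i\ge0}(t-1)^iA_i$ with $A_i$ matrices over $\mathcal{R}$. Derived series: $\mathbf{F}^{(1)}=\mathbf{F}'$, $\mathbf{F}^{(k+1)}=[\mathbf{F}^{(k)},\mathbf{F}^{(k)}]$,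 and $\mathbf{F}''=\mathbf{F}^{(2)}$. *)

theory Defs
  imports "HOL-Library.Poly_Mapping" "HOL-Library.Product_Plus"
    "HOL-Computational_Algebra.Formal_Power_Series"
begin

datatype 'a mat2 = M2 'a 'a 'a 'a
  (* M2 a b c d  is the matrix  [[a, b], [c, d]] *)

instantiation mat2 :: (comm_ring_1) monoid_mult
begin
fun times_mat2 :: "'a mat2 \<Rightarrow> 'a mat2 \<Rightarrow> 'a mat2" where
  "times_mat2 (M2 a b c d) (M2 e f g h) =
     M2 (a*e + b*g) (a*f + b*h) (c*e + d*g) (c*f + d*h)"
definition one_mat2 :: "'a mat2" where "one_mat2 = M2 1 0 0 1"
instance
proof
  fix p q r :: "'a mat2"
  show "p * q * r = p * (q * r)"
    by (cases p; cases q; cases r) (simp add: algebra_simps)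
  show "1 * p = p" by (cases p) (simp add: one_mat2_def)
  show "p * 1 = p" by (cases p) (simp add: one_mat2_def)
qed
end

fun mat2_map :: "('a \<Rightarrow> 'b) \<Rightarrow> 'a mat2 \<Rightarrow> 'b mat2" where
  "mat2_map f (M2 a b c d) = M2 (f a) (f b) (f c) (f d)"

fun mat2_entries :: "'a mat2 \<Rightarrow> 'a set" where
  "mat2_entries (M2 a b c d) = {a, b, c, d}"

inductive_set gen_grp :: "'a::monoid_mult set \<Rightarrow> 'a set" for X where
  one: "1 \<in> gen_grp X"
| gen: "x \<in> X \<Longrightarrow> x \<in> gen_grp X"
| inv: "x \<in> X \<Longrightarrow> x * y = 1 \<Longrightarrow> y * x = 1 \<Longrightarrow> y \<in> gen_grp X"
| mult: "a \<in> gen_grp X \<Longrightarrow> b \<in> gen_grp X \<Longrightarrow> a * b \<in> gen_grp X"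

definition commutators :: "'a::monoid_mult set \<Rightarrow> 'a set" where
  "commutators H = {a * b * a' * b' | a b a' b'.
      a \<in> H \<and> b \<in> H \<and> a * a' = 1 \<and> a' * a = 1 \<and> b * b' = 1 \<and> b' * b = 1}"

definition derived :: "'a::monoid_mult set \<Rightarrow> 'a set" where
  "derived H = gen_grp (commutators H)"

text \<open>k-th derived subgroup: derived_series 1 H = H', derived_series 2 H = H''.\<close>
definition derived_series :: "nat \<Rightarrow> 'a::monoid_mult set \<Rightarrow> 'a set" where
  "derived_series k H = (derived ^^ k) H"

type_synonym R = "(int \<times> int) \<Rightarrow>\<^sub>0 int"    (* monomial x^a y^b  \<mapsto>  (a,b) *)
type_synonym Rt = "int \<Rightarrow>\<^sub>0 R"              (* Laurent polynomials in t over R *)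

definition xR :: R where "xR = Poly_Mapping.single (1, 0) 1"
definition yR :: R where "yR = Poly_Mapping.single (0, 1) 1"

definition constRt :: "R \<Rightarrow> Rt" where "constRt r = Poly_Mapping.single 0 r"
definition tRt :: Rt where "tRt = Poly_Mapping.single 1 1"

definition augR :: "R \<Rightarrow> int" where "augR r = (\<Sum>m\<in>Poly_Mapping.keys r. Poly_Mapping.lookup r m)"
definition Sigma_aug :: "R set" where "Sigma_aug = {r. augR r = 0}"

inductive_set ideal_pow_step :: "'a::comm_ring_1 set \<Rightarrow> 'a set \<Rightarrow> 'a set" for I P where
  zero: "0 \<in> ideal_pow_step I P"
| prod: "a \<in> I \<Longrightarrow> b \<in> P \<Longrightarrow> a * b \<in> ideal_pow_step I P"
| add: "u \<in> ideal_pow_step I P \<Longrightarrow> v \<in> ideal_pow_step I P \<Longrightarrow> u + v \<in> ideal_pow_step I P"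

fun ideal_pow :: "'a::comm_ring_1 set \<Rightarrow> nat \<Rightarrow> 'a set" where
  "ideal_pow I 0 = UNIV"
| "ideal_pow I (Suc n) = ideal_pow_step I (ideal_pow I n)"

definition M1 :: "Rt mat2" where
  "M1 = M2 1 (constRt (1 - yR)) 0 (constRt xR)"
definition M2T :: "Rt mat2" where
  "M2T = M2 (constRt yR * tRt) 0 (1 - constRt xR * tRt) 1"

definition FF :: "Rt mat2 set" where "FF = gen_grp {M1, M2T}"

text \<open>Embedding R[t,t^-1] into R[[s]] via t = 1 + s, t^-1 = sum_i (-s)^i.\<close>
definition tinv_fps :: "R fps" where "tinv_fps = Abs_fps (\<lambda>i. (-1) ^ i)"

definition tpow_fps :: "int \<Rightarrow> R fps" where
  "tpow_fps n = (if 0 \<le> n then (1 + fps_X) ^ nat n else tinv_fps ^ nat (- n))"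

definition emb_fps :: "Rt \<Rightarrow> R fps" where
  "emb_fps p = (\<Sum>n\<in>Poly_Mapping.keys p. fps_const (Poly_Mapping.lookup p n) * tpow_fps n)"

definition coeff_mat :: "Rt mat2 \<Rightarrow> nat \<Rightarrow> R mat2" where
  "coeff_mat g i = mat2_map (\<lambda>p. fps_nth (emb_fps p) i) g"

end

theory Submission
  imports Defs "HOL-Library.Product_Lexorder"
begin

text \<open>Write \<open>a\<close>, \<open>b\<close> for the two generators and \<open>s = t - 1\<close>. At \<open>t = 1\<close> both generators
  fix the row \<open>W = (x - 1, y - 1)\<close> and multiply the column \<open>V = (1 - y, x - 1)\<^sup>T\<close> by a unit;
  hence the image of \<open>F'\<close> fixes \<open>W\<close> and \<open>V\<close>, such matrices commute, and \<open>F''\<close> evaluates to \<open>1\<close>.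
  Conversely, modulo \<open>F''\<close> every element of \<open>F\<close> has the form \<open>a\<^sup>m b\<^sup>n c\<close> with \<open>c\<close> a product
  of conjugates of \<open>[a, b]\<^sup>\<plusminus>\<^sup>1\<close>; at \<open>t = 1\<close> this is \<open>x\<^sup>m y\<^sup>n\<close> in determinant and
  \<open>1 - w E\<close> with \<open>E = V W\<close>, where the weight \<open>w\<close> counts the conjugates with signs.
  An element with value \<open>1\<close> thus has \<open>m = n = 0\<close> and \<open>w = 0\<close>, and its conjugates cancel in
  pairs because \<open>F'/F''\<close> is abelian.

  For (ii), augmentation \<open>x, y \<mapsto> 1\<close> sends \<open>F\<close> into the commutative group of matrices
  \<open>[[u, 0], [1 - u, 1]]\<close>, so elements of \<open>F''\<close> are \<open>1\<close> modulo \<open>s\<close> and modulo \<open>\<Sigma>\<close>.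
  Commutators of matrices congruent to \<open>1\<close> modulo \<open>s\<^sup>d \<Sigma>\<^sup>d\<close> are congruent to \<open>1\<close> modulo
  \<open>s\<^sup>2\<^sup>d \<Sigma>\<^sup>2\<^sup>d\<close>, and induction along the derived series gives level \<open>2\<^sup>k\<^sup>-\<^sup>2\<close> for \<open>F\<^sup>(\<^sup>k\<^sup>)\<close>.\<close>

section \<open>Groups of units inside a monoid\<close>

lemma inverse_unique:
  fixes x y z :: "'a::monoid_mult"
  assumes "x * y = 1" "z * x = 1" shows "y = z"
  by (metis assms mult.assoc mult_1_left mult_1_right)

definition inv_closed_submonoid :: "'a::monoid_mult set \<Rightarrow> bool" where
  "inv_closed_submonoid S \<longleftrightarrow> 1 \<in> S \<and> (\<forall>a\<in>S. \<forall>b\<in>S. a * b \<in> S)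
     \<and> (\<forall>a\<in>S. \<forall>a'. a * a' = 1 \<longrightarrow> a' * a = 1 \<longrightarrow> a' \<in> S)"

lemma inv_closed_submonoidI:
  assumes "1 \<in> S" "\<And>a b. a \<in> S \<Longrightarrow> b \<in> S \<Longrightarrow> a * b \<in> S"
    "\<And>a a'. a \<in> S \<Longrightarrow> a * a' = 1 \<Longrightarrow> a' * a = 1 \<Longrightarrow> a' \<in> S"
  shows "inv_closed_submonoid S"
  using assms by (auto simp: inv_closed_submonoid_def)

lemma inv_closed_submonoidD:
  assumes "inv_closed_submonoid S"
  shows inv_closed_submonoid_one: "1 \<in> S"
    and inv_closed_submonoid_mult: "a \<in> S \<Longrightarrow> b \<in> S \<Longrightarrow> a * b \<in> S"
    and inv_closed_submonoid_inverse: "a \<in> S \<Longrightarrow> a * a' = 1 \<Longrightarrow> a' * a = 1 \<Longrightarrow> a' \<in> S"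
  using assms by (auto simp: inv_closed_submonoid_def)

lemma inv_closed_submonoid_singleton_one: "inv_closed_submonoid {1}"
  by (rule inv_closed_submonoidI) auto

lemma gen_grp_subset:
  assumes "inv_closed_submonoid S" "X \<subseteq> S" shows "gen_grp X \<subseteq> S"
proof
  fix g assume "g \<in> gen_grp X" then show "g \<in> S"
    by induction (use assms in \<open>auto intro: inv_closed_submonoidD[OF assms(1)]\<close>)
qed

lemma gen_grp_mono:
  assumes "X \<subseteq> Y" shows "gen_grp X \<subseteq> gen_grp Y"
proof
  fix g assume "g \<in> gen_grp X" then show "g \<in> gen_grp Y"
    by induction (use assms in \<open>auto intro: gen_grp.intros\<close>)
qed

lemma gen_grp_invertible:
  assumes gens: "\<And>x. x \<in> X \<Longrightarrow> \<exists>y. x * y = 1 \<and> y * x = 1" and "g \<in> gen_grp X"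
  shows "\<exists>h\<in>gen_grp X. g * h = 1 \<and> h * g = 1"
  using assms(2)
proof induction
  case one then show ?case by (auto intro: gen_grp.one)
next
  case (gen x)
  then obtain y where "x * y = 1" "y * x = 1" using gens by blast
  then show ?case using gen by (auto intro: gen_grp.inv)
next
  case (inv x y) then show ?case by (auto intro: gen_grp.gen)
next
  case (mult a b)
  then obtain a' b' where "a' \<in> gen_grp X" "b' \<in> gen_grp X"
    "a * a' = 1" "a' * a = 1" "b * b' = 1" "b' * b = 1" by blast
  then have "b' * a' \<in> gen_grp X" "a * b * (b' * a') = 1" "b' * a' * (a * b) = 1"
    by (auto intro: gen_grp.mult simp: mult.assoc) (simp_all flip: mult.assoc)
  then show ?case by blast
qed

lemma inv_closed_submonoid_gen_grp:
  assumes "\<And>x. x \<in> X \<Longrightarrow> \<exists>y. x * y = 1 \<and> y * x = 1"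
  shows "inv_closed_submonoid (gen_grp X)"
proof (rule inv_closed_submonoidI)
  fix a a' assume "a \<in> gen_grp X" "a * a' = 1" "a' * a = 1"
  with gen_grp_invertible[OF assms] show "a' \<in> gen_grp X"
    by (metis inverse_unique)
qed (auto intro: gen_grp.one gen_grp.mult)

lemma commutators_invertible:
  assumes "x \<in> commutators H" shows "\<exists>y. x * y = 1 \<and> y * x = 1"
proof -
  from assms obtain a b a' b' where x: "x = a * b * a' * b'"
    and inv: "a * a' = 1" "a' * a = 1" "b * b' = 1" "b' * b = 1"
    by (auto simp: commutators_def)
  have "x * (b * a * b' * a') = 1" "(b * a * b' * a') * x = 1"
    unfolding x by (simp_all add: mult.assoc) (simp_all flip: mult.assoc add: inv)
  then show ?thesis by blast
qed

lemma inv_closed_submonoid_derived: "inv_closed_submonoid (derived H)"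
  unfolding derived_def by (rule inv_closed_submonoid_gen_grp) (rule commutators_invertible)

lemma commutators_subset: "inv_closed_submonoid S \<Longrightarrow> commutators S \<subseteq> S"
  unfolding commutators_def
  by (auto intro!: inv_closed_submonoid_mult dest: inv_closed_submonoid_inverse)

lemma derived_subset: "inv_closed_submonoid S \<Longrightarrow> derived S \<subseteq> S"
  unfolding derived_def by (metis gen_grp_subset commutators_subset)

lemma derived_mono: "H \<subseteq> K \<Longrightarrow> derived H \<subseteq> derived K"
  unfolding derived_def commutators_def by (rule gen_grp_mono) blast

lemma derived_commutative:
  assumes "\<And>a b. a \<in> H \<Longrightarrow> b \<in> H \<Longrightarrow> a * b = b * a"
  shows "derived H \<subseteq> {1}"
proof -
  have "commutators H \<subseteq> {1}"
  proof
    fix x assume "x \<in> commutators H"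
    then obtain a b a' b' where "x = a * b * a' * b'" "a \<in> H" "b \<in> H" "a * a' = 1" "b * b' = 1"
      by (auto simp: commutators_def)
    then have "x = b * (a * a') * b'" by (metis assms mult.assoc)
    with \<open>a * a' = 1\<close> \<open>b * b' = 1\<close> show "x \<in> {1}" by simp
  qed
  then show ?thesis
    unfolding derived_def by (rule gen_grp_subset[OF inv_closed_submonoid_singleton_one])
qed

lemma commutator_in_derived:
  assumes "a \<in> H" "b \<in> H" "a * a' = 1" "a' * a = 1" "b * b' = 1" "b' * b = 1"
  shows "a * b * a' * b' \<in> derived H"
  unfolding derived_def using assms by (intro gen_grp.gen) (auto simp: commutators_def)

lemma derived_series_Suc: "derived_series (Suc k) H = derived (derived_series k H)"
  by (simp add: derived_series_def)

definition multiplicative :: "('a::monoid_mult \<Rightarrow> 'b::monoid_mult) \<Rightarrow> bool" where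
  "multiplicative h \<longleftrightarrow> h 1 = 1 \<and> (\<forall>a b. h (a * b) = h a * h b)"

lemma multiplicative_comp:
  "multiplicative f \<Longrightarrow> multiplicative g \<Longrightarrow> multiplicative (f \<circ> g)"
  by (simp add: multiplicative_def)

lemma image_gen_grp_subset:
  assumes "multiplicative h" shows "h ` gen_grp X \<subseteq> gen_grp (h ` X)"
proof -
  have "h g \<in> gen_grp (h ` X)" if "g \<in> gen_grp X" for g
    using that
  proof induction
    case (inv x y)
    then have "h x * h y = 1" "h y * h x = 1"
      using assms by (metis multiplicative_def)+
    then show ?case using inv by (auto intro: gen_grp.inv)
  qed (use assms in \<open>auto simp: multiplicative_def intro: gen_grp.intros\<close>)
  then show ?thesis by blast
qed

lemma image_commutators_subset:
  assumes "multiplicative h" shows "h ` commutators H \<subseteq> commutators (h ` H)"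
proof
  fix u assume "u \<in> h ` commutators H"
  then obtain a b a' b' where "u = h a * h b * h a' * h b'" "a \<in> H" "b \<in> H"
    "h a * h a' = 1" "h a' * h a = 1" "h b * h b' = 1" "h b' * h b = 1"
    using assms unfolding commutators_def multiplicative_def by auto metis
  then show "u \<in> commutators (h ` H)" unfolding commutators_def by blast
qed

lemma image_derived_subset:
  assumes "multiplicative h" shows "h ` derived H \<subseteq> derived (h ` H)"
  unfolding derived_def
  using image_gen_grp_subset[OF assms] gen_grp_mono[OF image_commutators_subset[OF assms]]
  by blast

definition normalizes :: "'a::monoid_mult set \<Rightarrow> 'a set \<Rightarrow> bool" where
  "normalizes G H \<longleftrightarrow> (\<forall>g\<in>G. \<forall>g' h. g * g' = 1 \<longrightarrow> g' * g = 1 \<longrightarrow> h \<in> H \<longrightarrow> g * h * g' \<in> H)"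

lemma normalizesD:
  "normalizes G H \<Longrightarrow> g \<in> G \<Longrightarrow> g * g' = 1 \<Longrightarrow> g' * g = 1 \<Longrightarrow> h \<in> H \<Longrightarrow> g * h * g' \<in> H"
  by (simp add: normalizes_def)

lemma normalizes_self: "inv_closed_submonoid G \<Longrightarrow> normalizes G G"
  unfolding normalizes_def
  by (auto intro!: inv_closed_submonoid_mult dest: inv_closed_submonoid_inverse)

lemma conjugate_mult:
  fixes g g' a b :: "'a::monoid_mult"
  assumes "g' * g = 1" shows "g * (a * b) * g' = (g * a * g') * (g * b * g')"
proof -
  have "(g * a * g') * (g * b * g') = g * a * (g' * g) * (b * g')" by (simp add: mult.assoc)
  then show ?thesis by (simp add: assms mult.assoc)
qed

lemma multiplicative_conjugation:
  assumes "g * g' = 1" "g' * g = 1" shows "multiplicative (\<lambda>x. g * x * g')"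
  using assms by (simp add: multiplicative_def conjugate_mult)

lemma normalizes_derived:
  assumes "normalizes G H" shows "normalizes G (derived H)"
  unfolding normalizes_def
proof (intro ballI allI impI)
  fix g g' h assume g: "g \<in> G" "g * g' = 1" "g' * g = 1" and "h \<in> derived H"
  have "(\<lambda>x. g * x * g') ` derived H \<subseteq> derived ((\<lambda>x. g * x * g') ` H)"
    by (rule image_derived_subset[OF multiplicative_conjugation[OF g(2,3)]])
  also have "\<dots> \<subseteq> derived H"
    using normalizesD[OF assms g] by (intro derived_mono) blast
  finally show "g * h * g' \<in> derived H" using \<open>h \<in> derived H\<close> by blast
qed

definition zpow :: "'a::monoid_mult \<Rightarrow> 'a \<Rightarrow> int \<Rightarrow> 'a" where
  "zpow x x' m = (if 0 \<le> m then x ^ nat m else x' ^ nat (- m))"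

lemma zpow_0 [simp]: "zpow x x' 0 = 1"
  and zpow_1 [simp]: "zpow x x' 1 = x"
  and zpow_minus_1 [simp]: "zpow x x' (-1) = x'"
  by (simp_all add: zpow_def)

lemma multiplicative_zpow:
  "multiplicative h \<Longrightarrow> h (zpow x x' m) = zpow (h x) (h x') m"
proof -
  assume "multiplicative h"
  then have "h (y ^ n) = h y ^ n" for y n
    by (induction n) (simp_all add: multiplicative_def)
  then show ?thesis by (simp add: zpow_def)
qed

context
  fixes x x' :: "'a::monoid_mult"
  assumes inverse: "x * x' = 1" "x' * x = 1"
begin

lemma zpow_plus_1: "zpow x x' (m + 1) = zpow x x' m * x"
proof (cases "0 \<le> m")
  case True
  then have "nat (m + 1) = Suc (nat m)" by simp
  with True show ?thesis by (simp add: zpow_def power_commutes)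
next
  case False
  define k where "k = nat (- (m + 1))"
  have k: "nat (- m) = Suc k" using False unfolding k_def by arith
  have "x' ^ Suc k * x = x' ^ k" by (simp add: power_Suc2 mult.assoc inverse del: power_Suc)
  with False k show ?thesis by (simp add: zpow_def k_def)
qed

lemma zpow_minus_plus_1: "zpow x x' (m - 1) = zpow x x' m * x'"
proof (cases "0 < m")
  case True
  define k where "k = nat (m - 1)"
  have k: "nat m = Suc k" using True unfolding k_def by arith
  have "x ^ Suc k * x' = x ^ k" by (simp add: power_Suc2 mult.assoc inverse del: power_Suc)
  with True k show ?thesis by (simp add: zpow_def k_def)
next
  case False
  then have "nat (1 - m) = Suc (nat (- m))" by arith
  with False show ?thesis by (simp add: zpow_def power_Suc2 del: power_Suc)
qed

lemma zpow_add: "zpow x x' (m + n) = zpow x x' m * zpow x x' n"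
proof (induction n rule: int_induct[where k = 0])
  case (step1 i)
  have "zpow x x' (m + (i + 1)) = zpow x x' (m + i) * x"
    using zpow_plus_1[of "m + i"] by (simp add: add.assoc)
  then show ?case using step1 by (simp add: zpow_plus_1 mult.assoc)
next
  case (step2 i)
  have "zpow x x' (m + (i - 1)) = zpow x x' (m + i) * x'"
    using zpow_minus_plus_1[of "m + i"] by (simp add: algebra_simps)
  then show ?case using step2 by (simp add: zpow_minus_plus_1 mult.assoc)
qed simp

lemma zpow_inverse [simp]:
  "zpow x x' m * zpow x x' (- m) = 1" "zpow x x' (- m) * zpow x x' m = 1"
  "zpow x x' m * (zpow x x' (- m) * y) = y" "zpow x x' (- m) * (zpow x x' m * y) = y"
  using zpow_add[of m "- m"] zpow_add[of "- m" m] by (simp_all flip: mult.assoc)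

lemma zpow_in: "inv_closed_submonoid H \<Longrightarrow> x \<in> H \<Longrightarrow> zpow x x' m \<in> H"
proof -
  assume H: "inv_closed_submonoid H" "x \<in> H"
  then have "x' \<in> H" using inv_closed_submonoid_inverse inverse by blast
  have "y ^ n \<in> H" if "y \<in> H" for y n
    using that by (induction n) (auto intro: inv_closed_submonoidD[OF H(1)])
  with H(2) \<open>x' \<in> H\<close> show ?thesis by (simp add: zpow_def)
qed

end

section \<open>Expansion in powers of t - 1 and augmentation\<close>

definition lin_ext :: "('b::comm_ring_1 \<Rightarrow> 'c::comm_ring_1) \<Rightarrow> ('a \<Rightarrow> 'c) \<Rightarrow> ('a \<Rightarrow>\<^sub>0 'b) \<Rightarrow> 'c" where
  "lin_ext \<phi> \<psi> p = (\<Sum>n\<in>Poly_Mapping.keys p. \<phi> (Poly_Mapping.lookup p n) * \<psi> n)"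

context
  fixes \<phi> :: "'b::comm_ring_1 \<Rightarrow> 'c::comm_ring_1" and \<psi> :: "'a::monoid_add \<Rightarrow> 'c"
  assumes additive: "\<phi> 0 = 0" "\<And>u v. \<phi> (u + v) = \<phi> u + \<phi> v"
begin

lemma lin_ext_superset:
  assumes "finite S" "Poly_Mapping.keys p \<subseteq> S"
  shows "lin_ext \<phi> \<psi> p = (\<Sum>n\<in>S. \<phi> (Poly_Mapping.lookup p n) * \<psi> n)"
  unfolding lin_ext_def using assms
  by (intro sum.mono_neutral_left) (auto simp: in_keys_iff additive)

lemma lin_ext_add: "lin_ext \<phi> \<psi> (p + q) = lin_ext \<phi> \<psi> p + lin_ext \<phi> \<psi> q"
proof -
  let ?S = "Poly_Mapping.keys p \<union> Poly_Mapping.keys q"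
  have "lin_ext \<phi> \<psi> (p + q) = (\<Sum>n\<in>?S. \<phi> (Poly_Mapping.lookup (p + q) n) * \<psi> n)"
    by (rule lin_ext_superset) (auto simp: keys_add)
  also have "\<dots> = (\<Sum>n\<in>?S. \<phi> (Poly_Mapping.lookup p n) * \<psi> n)
      + (\<Sum>n\<in>?S. \<phi> (Poly_Mapping.lookup q n) * \<psi> n)"
    by (simp add: lookup_add additive distrib_right sum.distrib)
  also have "\<dots> = lin_ext \<phi> \<psi> p + lin_ext \<phi> \<psi> q"
    by (subst (1 2) lin_ext_superset[symmetric]) auto
  finally show ?thesis .
qed

lemma lin_ext_zero [simp]: "lin_ext \<phi> \<psi> 0 = 0"
  by (simp add: lin_ext_def)

lemma lin_ext_single: "lin_ext \<phi> \<psi> (Poly_Mapping.single n r) = \<phi> r * \<psi> n"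
  by (cases "r = 0") (simp_all add: lin_ext_def additive)

lemma lin_ext_mult:
  assumes "\<And>u v. \<phi> (u * v) = \<phi> u * \<phi> v" and "\<And>m n. \<psi> (m + n) = \<psi> m * \<psi> n"
  shows "lin_ext \<phi> \<psi> (p * q) = lin_ext \<phi> \<psi> p * lin_ext \<phi> \<psi> q"
proof -
  have update_eq_add: "Poly_Mapping.update a b f = f + Poly_Mapping.single a b"
    if "a \<notin> Poly_Mapping.keys f" for a b and f :: "'a \<Rightarrow>\<^sub>0 'b"
    using that by (intro poly_mapping_eqI) (auto simp: lookup_update lookup_add lookup_single in_keys_iff when_def)
  have single: "lin_ext \<phi> \<psi> (Poly_Mapping.single a b * q)
      = lin_ext \<phi> \<psi> (Poly_Mapping.single a b) * lin_ext \<phi> \<psi> q" for a b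
    by (induction q rule: update_induct)
      (simp_all add: update_eq_add lin_ext_add mult_single lin_ext_single assms algebra_simps)
  show ?thesis
    by (induction p rule: update_induct) (simp_all add: update_eq_add distrib_right lin_ext_add single)
qed

end

lemma tinv_fps_inverse: "(1 + fps_X) * tinv_fps = (1 :: R fps)" "tinv_fps * (1 + fps_X) = (1 :: R fps)"
proof -
  show "(1 + fps_X) * tinv_fps = (1 :: R fps)"
  proof (rule fps_ext)
    fix n show "fps_nth ((1 + fps_X) * tinv_fps) n = fps_nth (1 :: R fps) n"
      by (cases n) (simp_all add: distrib_right tinv_fps_def)
  qed
  then show "tinv_fps * (1 + fps_X) = (1 :: R fps)" by (simp add: mult.commute)
qed

lemma tpow_fps_add: "tpow_fps (m + n) = tpow_fps m * tpow_fps n"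
proof -
  have "tpow_fps = zpow (1 + fps_X) tinv_fps"
    by (simp add: tpow_fps_def zpow_def fun_eq_iff)
  then show ?thesis using zpow_add[OF tinv_fps_inverse] by simp
qed

lemma emb_fps_lin_ext: "emb_fps = lin_ext fps_const tpow_fps"
  by (simp add: emb_fps_def lin_ext_def fun_eq_iff)

lemma emb_fps_add: "emb_fps (p + q) = emb_fps p + emb_fps q"
  unfolding emb_fps_lin_ext by (rule lin_ext_add) simp_all

lemma emb_fps_mult: "emb_fps (p * q) = emb_fps p * emb_fps q"
  unfolding emb_fps_lin_ext
  by (rule lin_ext_mult) (simp_all add: tpow_fps_add)

lemma emb_fps_single: "emb_fps (Poly_Mapping.single n r) = fps_const r * tpow_fps n"
  unfolding emb_fps_lin_ext by (rule lin_ext_single) simp_all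

lemma emb_fps_zero [simp]: "emb_fps 0 = 0"
  by (simp add: emb_fps_def)

lemma emb_fps_one [simp]: "emb_fps 1 = 1"
  using emb_fps_single[of 0 1] by (simp add: tpow_fps_def)

lemma emb_fps_diff: "emb_fps (p - q) = emb_fps p - emb_fps q"
  using emb_fps_add[of "p - q" q] by (simp add: eq_diff_eq)

lemma emb_fps_constRt [simp]: "emb_fps (constRt r) = fps_const r"
  by (simp add: constRt_def emb_fps_single tpow_fps_def)

lemma emb_fps_tRt [simp]: "emb_fps tRt = 1 + fps_X"
  by (simp add: tRt_def emb_fps_single tpow_fps_def)

definition tinvRt :: Rt where "tinvRt = Poly_Mapping.single (-1) 1"

lemma tRt_inverse: "tRt * tinvRt = 1"
  by (simp add: tRt_def tinvRt_def mult_single)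

lemma constRt_mult: "constRt (r * s) = constRt r * constRt s"
  by (simp add: constRt_def mult_single)

lemma constRt_one [simp]: "constRt 1 = 1"
  by (simp add: constRt_def)

definition eval1 :: "Rt \<Rightarrow> R" where "eval1 p = fps_nth (emb_fps p) 0"

lemma eval1_add: "eval1 (p + q) = eval1 p + eval1 q"
  and eval1_mult: "eval1 (p * q) = eval1 p * eval1 q"
  and eval1_diff: "eval1 (p - q) = eval1 p - eval1 q"
  and eval1_zero [simp]: "eval1 0 = 0"
  and eval1_one [simp]: "eval1 1 = 1"
  and eval1_constRt [simp]: "eval1 (constRt r) = r"
  and eval1_tRt [simp]: "eval1 tRt = 1"
  by (simp_all add: eval1_def emb_fps_add emb_fps_mult emb_fps_diff)

lemma augR_lin_ext: "augR = lin_ext id (\<lambda>_. 1)"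
  by (simp add: augR_def lin_ext_def fun_eq_iff)

lemma augR_add: "augR (r + s) = augR r + augR s"
  unfolding augR_lin_ext by (rule lin_ext_add) simp_all

lemma augR_mult: "augR (r * s) = augR r * augR s"
  unfolding augR_lin_ext by (rule lin_ext_mult) simp_all

lemma augR_single [simp]: "augR (Poly_Mapping.single n c) = c"
  unfolding augR_lin_ext by (subst lin_ext_single) simp_all

lemma augR_zero [simp]: "augR 0 = 0"
  by (simp add: augR_def)

lemma augR_one [simp]: "augR 1 = 1"
  using augR_single[of 0 1] by simp

lemma augR_diff: "augR (r - s) = augR r - augR s"
  using augR_add[of "r - s" s] by (simp add: eq_diff_eq)

lemma augR_sum: "augR (sum f A) = (\<Sum>a\<in>A. augR (f a))"
  by (induction A rule: infinite_finite_induct) (simp_all add: augR_add)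

lemma augR_xR [simp]: "augR xR = 1" and augR_yR [simp]: "augR yR = 1"
  by (simp_all add: xR_def yR_def)

section \<open>2x2 matrices and the stabilizer of a row and a column\<close>

instantiation mat2 :: (comm_ring_1) "{zero, plus, minus, uminus}"
begin
definition zero_mat2 :: "'a mat2" where "zero_mat2 = M2 0 0 0 0"
fun plus_mat2 :: "'a mat2 \<Rightarrow> 'a mat2 \<Rightarrow> 'a mat2" where
  "plus_mat2 (M2 a b c d) (M2 e f g h) = M2 (a+e) (b+f) (c+g) (d+h)"
fun minus_mat2 :: "'a mat2 \<Rightarrow> 'a mat2 \<Rightarrow> 'a mat2" where
  "minus_mat2 (M2 a b c d) (M2 e f g h) = M2 (a-e) (b-f) (c-g) (d-h)"
fun uminus_mat2 :: "'a mat2 \<Rightarrow> 'a mat2" where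
  "uminus_mat2 (M2 a b c d) = M2 (-a) (-b) (-c) (-d)"
instance ..
end

instance mat2 :: (comm_ring_1) ring_1
proof
  fix p q r :: "'a mat2"
  show "p + q + r = p + (q + r)" by (cases p; cases q; cases r) (simp add: algebra_simps)
  show "p + q = q + p" by (cases p; cases q) (simp add: algebra_simps)
  show "0 + p = p" by (cases p) (simp add: zero_mat2_def)
  show "- p + p = 0" by (cases p) (simp add: zero_mat2_def)
  show "p - q = p + - q" by (cases p; cases q) simp
  show "(p + q) * r = p * r + q * r" by (cases p; cases q; cases r) (simp add: algebra_simps)
  show "p * (q + r) = p * q + p * r" by (cases p; cases q; cases r) (simp add: algebra_simps)
  show "(0::'a mat2) \<noteq> 1" by (simp add: zero_mat2_def one_mat2_def)
qed

lemma mat2_one: "(1 :: 'a::comm_ring_1 mat2) = M2 1 0 0 1"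
  by (simp add: one_mat2_def)

lemma mat2_zero: "(0 :: 'a::comm_ring_1 mat2) = M2 0 0 0 0"
  by (simp add: zero_mat2_def)

lemma multiplicative_mat2_map:
  assumes "\<And>u v. f (u + v) = f u + f v" "\<And>u v. f (u * v) = f u * f v" "f 0 = 0" "f 1 = 1"
  shows "multiplicative (mat2_map f)"
  unfolding multiplicative_def
proof (intro conjI allI)
  fix A B :: "'a mat2"
  show "mat2_map f (A * B) = mat2_map f A * mat2_map f B"
    by (cases A; cases B) (simp add: assms)
qed (simp add: mat2_one assms)

definition smat :: "'a::comm_ring_1 \<Rightarrow> 'a mat2" where "smat r = M2 r 0 0 r"

lemma smat_commute: "smat r * M = M * smat r"
  by (cases M) (simp add: smat_def algebra_simps)

lemma mult_smat_left_commute: "A * (smat r * X) = smat r * (A * X)"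
  by (metis mult.assoc smat_commute)

lemma smat_mult: "smat (r * s) = smat r * smat s"
  and smat_add: "smat (r + s) = smat r + smat s"
  and smat_uminus: "smat (- r) = - smat r"
  and smat_one [simp]: "smat 1 = 1"
  and smat_zero [simp]: "smat 0 = 0"
  by (simp_all add: smat_def mat2_one mat2_zero)

definition det2 :: "'a::comm_ring_1 mat2 \<Rightarrow> 'a" where
  "det2 M = (case M of M2 a b c d \<Rightarrow> a * d - b * c)"

lemma det2_mult: "det2 (A * B) = det2 A * det2 B"
  and det2_one [simp]: "det2 (1 :: 'a::comm_ring_1 mat2) = 1"
  for A B :: "'a::comm_ring_1 mat2"
  by (cases A; cases B; simp add: det2_def algebra_simps) (simp add: det2_def mat2_one)

lemma multiplicative_det2: "multiplicative det2"
  by (simp add: multiplicative_def det2_mult)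

definition stabilizer :: "'a::comm_ring_1 mat2 \<Rightarrow> 'a mat2 \<Rightarrow> 'a mat2 set" where
  "stabilizer W V = {U. W * U = W \<and> U * V = V}"

definition proj_stabilizer :: "'a::comm_ring_1 mat2 \<Rightarrow> 'a mat2 \<Rightarrow> 'a mat2 set" where
  "proj_stabilizer W V = {U. W * U = W \<and> (\<exists>l m. l * m = 1 \<and> U * V = smat l * V)}"

lemma scales_mult:
  assumes "U1 * V = smat l1 * V" "U2 * V = smat l2 * V"
  shows "U1 * U2 * V = smat (l1 * l2) * V"
proof -
  have "U1 * U2 * V = smat l2 * (U1 * V)"
    by (simp only: mult.assoc assms(2) mult_smat_left_commute)
  then show ?thesis by (simp only: assms(1) smat_mult mult.commute[of l1] mult.assoc)
qed

lemma scales_inverse: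
  assumes "U * V = smat l * V" "l * m = 1" "U' * U = 1"
  shows "U' * V = smat m * V"
proof -
  have "U' * V = U' * (smat m * (smat l * V))"
    by (simp add: assms(2) mult.commute flip: mult.assoc smat_mult)
  also have "\<dots> = smat m * (U' * U * V)"
    by (simp only: mult.assoc flip: assms(1)) (rule mult_smat_left_commute)
  finally show ?thesis by (simp add: assms(3))
qed

lemma fixes_inverse:
  fixes W U U' :: "'a::monoid_mult"
  assumes "W * U = W" "U * U' = 1" shows "W * U' = W"
proof -
  have "W * U' = W * U * U'" by (simp only: assms(1))
  also have "\<dots> = W" by (simp only: mult.assoc assms(2) mult_1_right)
  finally show ?thesis .
qed

lemma inv_closed_submonoid_proj_stabilizer: "inv_closed_submonoid (proj_stabilizer W V)"
proof (rule inv_closed_submonoidI)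
  fix U1 U2 assume "U1 \<in> proj_stabilizer W V" "U2 \<in> proj_stabilizer W V"
  then obtain l1 m1 l2 m2 where W: "W * U1 = W" "W * U2 = W"
    and l: "l1 * m1 = 1" "l2 * m2 = 1"
    and V: "U1 * V = smat l1 * V" "U2 * V = smat l2 * V"
    by (auto simp: proj_stabilizer_def)
  have "W * (U1 * U2) = W"
    using W by (simp flip: mult.assoc)
  moreover have "(l1 * l2) * (m1 * m2) = (l1 * m1) * (l2 * m2)"
    by (simp only: ac_simps)
  with l have "(l1 * l2) * (m1 * m2) = 1" by simp
  moreover have "U1 * U2 * V = smat (l1 * l2) * V"
    using V by (rule scales_mult)
  ultimately show "U1 * U2 \<in> proj_stabilizer W V"
    unfolding proj_stabilizer_def by blast
next
  fix U U' assume "U \<in> proj_stabilizer W V" and inv: "U * U' = 1" "U' * U = 1"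
  then obtain l m where U: "W * U = W" "l * m = 1" "U * V = smat l * V"
    by (auto simp: proj_stabilizer_def)
  have "W * U' = W" using U(1) inv(1) by (rule fixes_inverse)
  moreover have "U' * V = smat m * V" using U(3,2) inv(2) by (rule scales_inverse)
  moreover have "m * l = 1" using U(2) by (simp only: mult.commute)
  ultimately show "U' \<in> proj_stabilizer W V"
    unfolding proj_stabilizer_def by blast
qed (auto simp: proj_stabilizer_def intro: exI[of _ 1])

lemma inv_closed_submonoid_stabilizer: "inv_closed_submonoid (stabilizer W V)"
proof (rule inv_closed_submonoidI)
  fix U1 U2 assume "U1 \<in> stabilizer W V" "U2 \<in> stabilizer W V"
  then have "W * U1 = W" "W * U2 = W" "U1 * V = V" "U2 * V = V"
    by (simp_all add: stabilizer_def)
  then have "W * (U1 * U2) = W" "U1 * U2 * V = V"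
    by (simp flip: mult.assoc, simp add: mult.assoc)
  then show "U1 * U2 \<in> stabilizer W V"
    by (simp add: stabilizer_def)
next
  fix U U' assume U: "U \<in> stabilizer W V" and inv: "U * U' = 1" "U' * U = 1"
  have "U' * V = U' * (U * V)"
    using U by (simp add: stabilizer_def)
  also have "\<dots> = V"
    by (simp add: inv(2) flip: mult.assoc)
  moreover have "W * U' = W"
    using U by (intro fixes_inverse[OF _ inv(1)]) (simp add: stabilizer_def)
  ultimately show "U' \<in> stabilizer W V"
    by (simp add: stabilizer_def)
qed (simp add: stabilizer_def)

lemma commutators_proj_stabilizer: "commutators (proj_stabilizer W V) \<subseteq> stabilizer W V"
proof
  fix c assume c_comm: "c \<in> commutators (proj_stabilizer W V)"
  then obtain U1 U2 U1' U2' where c: "c = U1 * U2 * U1' * U2'"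
    and U: "U1 \<in> proj_stabilizer W V" "U2 \<in> proj_stabilizer W V"
    and inv: "U1 * U1' = 1" "U1' * U1 = 1" "U2 * U2' = 1" "U2' * U2 = 1"
    by (auto simp: commutators_def)
  from U obtain l1 m1 l2 m2 where l: "l1 * m1 = 1" "l2 * m2 = 1"
    "U1 * V = smat l1 * V" "U2 * V = smat l2 * V"
    by (auto simp: proj_stabilizer_def)
  have "U1' * V = smat m1 * V" "U2' * V = smat m2 * V"
    by (rule scales_inverse[OF l(3,1) inv(2)], rule scales_inverse[OF l(4,2) inv(4)])
  then have "c * V = smat (l1 * l2 * m1 * m2) * V"
    unfolding c by (intro scales_mult l(3,4))
  also have "l1 * l2 * m1 * m2 = (l1 * m1) * (l2 * m2)"
    by (simp only: ac_simps)
  also have "\<dots> = 1" using l by simp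
  finally have "c * V = V" by simp
  moreover have "c \<in> proj_stabilizer W V"
    using c_comm commutators_subset[OF inv_closed_submonoid_proj_stabilizer] by blast
  ultimately show "c \<in> stabilizer W V"
    by (simp add: stabilizer_def proj_stabilizer_def)
qed

lemma derived_proj_stabilizer: "derived (proj_stabilizer W V) \<subseteq> stabilizer W V"
  unfolding derived_def
  by (rule gen_grp_subset[OF inv_closed_submonoid_stabilizer commutators_proj_stabilizer])

lemma zpow_fixes:
  fixes X X' W :: "'a::monoid_mult"
  assumes inv: "X * X' = 1" "X' * X = 1" and W: "W * X = W"
  shows "W * zpow X X' i = W"
proof (induction i rule: int_induct[where k = 0])
  case (step1 i)
  then show ?case using W by (simp add: zpow_plus_1[OF inv] flip: mult.assoc)
next
  case (step2 i)
  have "W * X' = W" by (rule fixes_inverse[OF W inv(1)])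
  with step2 show ?case by (simp add: zpow_minus_plus_1[OF inv] flip: mult.assoc)
qed simp

lemma zpow_scales:
  fixes X X' V :: "'a::comm_ring_1 mat2"
  assumes inv: "X * X' = 1" "X' * X = 1" and l: "l * l' = 1" "l' * l = 1"
    and V: "X * V = smat l * V"
  shows "zpow X X' i * V = smat (zpow l l' i) * V"
proof (induction i rule: int_induct[where k = 0])
  case (step1 i)
  have "zpow X X' (i + 1) * V = zpow X X' i * (smat l * V)"
    by (simp only: zpow_plus_1[OF inv] mult.assoc V)
  also have "\<dots> = smat l * (smat (zpow l l' i) * V)"
    by (simp only: mult_smat_left_commute[of "zpow X X' i"] step1)
  finally have "zpow X X' (i + 1) * V = smat l * (smat (zpow l l' i) * V)" .
  then show ?case
    by (simp only: zpow_plus_1[OF l] mult.assoc[symmetric] smat_mult[symmetric]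
        mult.commute[of l "zpow l l' i"])
next
  case (step2 i)
  have V': "X' * V = smat l' * V" by (rule scales_inverse[OF V l(1) inv(2)])
  have "zpow X X' (i - 1) * V = zpow X X' i * (smat l' * V)"
    by (simp only: zpow_minus_plus_1[OF inv] mult.assoc V')
  also have "\<dots> = smat l' * (smat (zpow l l' i) * V)"
    by (simp only: mult_smat_left_commute[of "zpow X X' i"] step2)
  finally have "zpow X X' (i - 1) * V = smat l' * (smat (zpow l l' i) * V)" .
  then show ?case
    by (simp only: zpow_minus_plus_1[OF l] mult.assoc[symmetric] smat_mult[symmetric]
        mult.commute[of l' "zpow l l' i"])
qed simp

text \<open>For \<open>W = (b, -a)\<close> and \<open>V = (a, b)\<^sup>T\<close> with \<open>b \<noteq> 0\<close> over a domain, the matrices \<open>N\<close>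
  with \<open>W N = 0\<close> and \<open>N V = 0\<close> are the multiples of the square-zero matrix \<open>V W\<close>, so the
  stabilizer of \<open>W\<close> and \<open>V\<close> is commutative.\<close>

lemma annihilated_mult_zero:
  fixes a b :: "'a::idom"
  assumes "b \<noteq> 0"
    and N1: "M2 b (- a) 0 0 * N1 = 0" "N1 * M2 a 0 b 0 = 0"
    and N2: "M2 b (- a) 0 0 * N2 = 0"
  shows "N1 * N2 = 0"
proof -
  obtain p q r s where p: "N1 = M2 p q r s" by (cases N1)
  obtain e f g h where e: "N2 = M2 e f g h" by (cases N2)
  have h1: "b * p + - a * r = 0" "p * a + q * b = 0" "r * a + s * b = 0"
    using N1 unfolding p by (simp_all add: mat2_zero)
  have h2: "b * e + - a * g = 0" "b * f + - a * h = 0"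
    using N2 unfolding e by (simp_all add: mat2_zero)
  have "b * (p * e + q * g) = p * (b * e + - a * g) + g * (p * a + q * b)"
    "b * (p * f + q * h) = p * (b * f + - a * h) + h * (p * a + q * b)"
    "b * (r * e + s * g) = r * (b * e + - a * g) + g * (r * a + s * b)"
    "b * (r * f + s * h) = r * (b * f + - a * h) + h * (r * a + s * b)"
    by (simp_all add: algebra_simps)
  then have "b * (p * e + q * g) = 0" "b * (p * f + q * h) = 0"
    "b * (r * e + s * g) = 0" "b * (r * f + s * h) = 0"
    by (simp_all only: h1 h2 mult_zero_right add_0_right)
  with assms(1) have "p * e + q * g = 0" "p * f + q * h = 0" "r * e + s * g = 0" "r * f + s * h = 0"
    by (simp_all only: mult_eq_0_iff) blast+
  then show ?thesis by (simp only: p e times_mat2.simps mat2_zero)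
qed

lemma stabilizer_commute:
  fixes a b :: "'a::idom"
  assumes "b \<noteq> 0"
    and U: "U1 \<in> stabilizer (M2 b (- a) 0 0) (M2 a 0 b 0)" "U2 \<in> stabilizer (M2 b (- a) 0 0) (M2 a 0 b 0)"
  shows "U1 * U2 = U2 * U1"
proof -
  define N1 N2 where "N1 = U1 - 1" and "N2 = U2 - 1"
  have "M2 b (- a) 0 0 * N1 = 0" "N1 * M2 a 0 b 0 = 0"
    "M2 b (- a) 0 0 * N2 = 0" "N2 * M2 a 0 b 0 = 0"
    using U by (simp_all add: N1_def N2_def stabilizer_def right_diff_distrib left_diff_distrib)
  then have "N1 * N2 = 0" "N2 * N1 = 0"
    using annihilated_mult_zero[OF assms(1)] by blast+
  moreover have "U1 * U2 = 1 + N1 + N2 + N1 * N2" "U2 * U1 = 1 + N1 + N2 + N2 * N1"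
    by (simp_all add: N1_def N2_def algebra_simps)
  ultimately show ?thesis by simp
qed

text \<open>Lexicographic order makes \<open>int \<times> int\<close> an ordered cancellative monoid, so the
  library instance shows that \<open>R\<close> is an integral domain.\<close>

instance prod :: (linordered_ab_group_add, linordered_ab_group_add) ordered_cancel_comm_monoid_add
  by standard (auto simp: less_eq_prod_def)

lemma single_zero_one: "Poly_Mapping.single (0, 0) (1::int) = (1::R)"
  by (metis single_one zero_prod_def)

lemma xR_minus_one_nonzero: "xR - 1 \<noteq> 0"
proof
  assume "xR - 1 = 0"
  then have "Poly_Mapping.lookup xR (1, 0) = Poly_Mapping.lookup (1::R) (1, 0)" by simp
  then show False by (simp add: xR_def flip: single_zero_one add: lookup_single)
qed

definition xiR :: R where "xiR = Poly_Mapping.single (-1, 0) 1"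
definition yiR :: R where "yiR = Poly_Mapping.single (0, -1) 1"

lemma xR_inverse: "xR * xiR = 1" "xiR * xR = 1"
  and yR_inverse: "yR * yiR = 1" "yiR * yR = 1"
  by (simp_all add: xR_def xiR_def yR_def yiR_def mult_single single_zero_one)

lemma zpow_xR: "zpow xR xiR m = Poly_Mapping.single (m, 0) 1"
proof (induction m rule: int_induct[where k = 0])
  case base then show ?case by (simp add: single_zero_one)
next
  case (step1 i) then show ?case
    by (simp only: zpow_plus_1[OF xR_inverse]) (simp add: xR_def mult_single)
next
  case (step2 i) then show ?case
    by (simp only: zpow_minus_plus_1[OF xR_inverse]) (simp add: xiR_def mult_single)
qed

lemma zpow_yR: "zpow yR yiR m = Poly_Mapping.single (0, m) 1"
proof (induction m rule: int_induct[where k = 0])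
  case base then show ?case by (simp add: single_zero_one)
next
  case (step1 i) then show ?case
    by (simp only: zpow_plus_1[OF yR_inverse]) (simp add: yR_def mult_single)
next
  case (step2 i) then show ?case
    by (simp only: zpow_minus_plus_1[OF yR_inverse]) (simp add: yiR_def mult_single)
qed

definition M1i :: "Rt mat2" where
  "M1i = M2 1 (- constRt (1 - yR) * constRt xiR) 0 (constRt xiR)"
definition M2Ti :: "Rt mat2" where
  "M2Ti = M2 (constRt yiR * tinvRt) 0 (- (1 - constRt xR * tRt) * (constRt yiR * tinvRt)) 1"

lemma upper_unitriangular_inverse:
  fixes u x xi :: "'a::comm_ring_1"
  assumes "x * xi = 1"
  shows "M2 1 u 0 x * M2 1 (- u * xi) 0 xi = 1" "M2 1 (- u * xi) 0 xi * M2 1 u 0 x = 1"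
  using assms by (simp_all add: mat2_one algebra_simps)

lemma lower_unitriangular_inverse:
  fixes p q pi :: "'a::comm_ring_1"
  assumes "p * pi = 1"
  shows "M2 p 0 q 1 * M2 pi 0 (- q * pi) 1 = 1" "M2 pi 0 (- q * pi) 1 * M2 p 0 q 1 = 1"
proof -
  have "p * (pi * q) = q" "pi * p = 1"
    using assms by (simp_all add: mult.commute flip: mult.assoc)
  with assms show "M2 p 0 q 1 * M2 pi 0 (- q * pi) 1 = 1" "M2 pi 0 (- q * pi) 1 * M2 p 0 q 1 = 1"
    by (simp_all add: mat2_one algebra_simps)
qed

lemma M1_inverse: "M1 * M1i = 1" "M1i * M1 = 1"
proof -
  have "constRt xR * constRt xiR = 1" by (simp add: xR_inverse flip: constRt_mult)
  then show "M1 * M1i = 1" "M1i * M1 = 1"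
    unfolding M1_def M1i_def by (simp_all only: upper_unitriangular_inverse)
qed

lemma M2T_inverse: "M2T * M2Ti = 1" "M2Ti * M2T = 1"
proof -
  have "(constRt yR * tRt) * (constRt yiR * tinvRt) = 1"
    using tRt_inverse by (simp add: yR_inverse algebra_simps flip: constRt_mult)
  then show "M2T * M2Ti = 1" "M2Ti * M2T = 1"
    unfolding M2T_def M2Ti_def by (simp_all only: lower_unitriangular_inverse)
qed

definition at1 :: "Rt mat2 \<Rightarrow> R mat2" where "at1 = mat2_map eval1"

lemma coeff_mat_0: "coeff_mat g 0 = at1 g"
  by (simp add: coeff_mat_def at1_def eval1_def[abs_def])

lemma multiplicative_at1: "multiplicative at1"
  unfolding at1_def by (rule multiplicative_mat2_map) (simp_all add: eval1_add eval1_mult)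

lemma at1_mult: "at1 (A * B) = at1 A * at1 B" and at1_one [simp]: "at1 1 = 1"
  using multiplicative_at1 by (simp_all add: multiplicative_def)

lemma at1_inverse:
  "at1 M1 * at1 M1i = 1" "at1 M1i * at1 M1 = 1" "at1 M2T * at1 M2Ti = 1" "at1 M2Ti * at1 M2T = 1"
  using M1_inverse M2T_inverse by (simp_all flip: at1_mult)

lemma at1_M1: "at1 M1 = M2 1 (1 - yR) 0 xR"
  and at1_M2T: "at1 M2T = M2 yR 0 (1 - xR) 1"
  by (simp_all add: at1_def M1_def M2T_def eval1_mult eval1_diff)

definition Wrow :: "R mat2" where "Wrow = M2 (xR - 1) (- (1 - yR)) 0 0"
definition Vcol :: "R mat2" where "Vcol = M2 (1 - yR) 0 (xR - 1) 0"

lemma eigen_M1: "Wrow * at1 M1 = Wrow" "at1 M1 * Vcol = smat xR * Vcol"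
  and eigen_M2T: "Wrow * at1 M2T = Wrow" "at1 M2T * Vcol = smat yR * Vcol"
  and Wrow_Vcol: "Wrow * Vcol = 0"
  unfolding at1_M1 at1_M2T Wrow_def Vcol_def smat_def mat2_zero
  by (simp_all only: times_mat2.simps mat2.inject) (intro conjI; (rule refl | algebra))+

lemma at1_generators_proj_stabilizer: "at1 ` {M1, M2T} \<subseteq> proj_stabilizer Wrow Vcol"
  using eigen_M1 eigen_M2T xR_inverse yR_inverse by (auto simp: proj_stabilizer_def)

definition Emat :: "R mat2" where "Emat = Vcol * Wrow"

lemma Emat_scales: "U * Vcol = smat l * Vcol \<Longrightarrow> U * Emat = smat l * Emat"
  unfolding Emat_def by (simp only: flip: mult.assoc)

lemma Emat_fixes: "Wrow * U = Wrow \<Longrightarrow> Emat * U = Emat"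
  unfolding Emat_def by (simp only: mult.assoc)

lemma Emat_square: "Emat * Emat = 0"
proof -
  have "Emat * Emat = Vcol * (Wrow * Vcol) * Wrow"
    unfolding Emat_def by (simp only: mult.assoc)
  then show ?thesis by (simp only: Wrow_Vcol mult_zero_left mult_zero_right)
qed

lemma at1_commutator: "at1 (M1 * M2T * M1i * M2Ti) = 1 - Emat"
  and at1_commutator': "at1 (M2T * M1 * M2Ti * M1i) = 1 + Emat"
proof -
  have swap: "(1 - Emat) * (at1 M2T * at1 M1) = at1 M1 * at1 M2T"
    "(1 + Emat) * (at1 M1 * at1 M2T) = at1 M2T * at1 M1"
    unfolding at1_M1 at1_M2T Emat_def Wrow_def Vcol_def mat2_one
    by (simp_all only: times_mat2.simps minus_mat2.simps plus_mat2.simps mat2.inject)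
      (intro conjI; (rule refl | algebra))+
  have "at1 (M1 * M2T * M1i * M2Ti) = (1 - Emat) * (at1 M2T * at1 M1) * at1 M1i * at1 M2Ti"
    by (simp only: swap at1_mult)
  also have "\<dots> = 1 - Emat"
    by (simp add: mult.assoc at1_inverse)
  finally show "at1 (M1 * M2T * M1i * M2Ti) = 1 - Emat" .
  have "at1 (M2T * M1 * M2Ti * M1i) = (1 + Emat) * (at1 M1 * at1 M2T) * at1 M2Ti * at1 M1i"
    by (simp only: swap at1_mult)
  also have "\<dots> = 1 + Emat"
    by (simp add: mult.assoc at1_inverse)
  finally show "at1 (M2T * M1 * M2Ti * M1i) = 1 + Emat" .
qed

abbreviation powA :: "int \<Rightarrow> Rt mat2" where "powA \<equiv> zpow M1 M1i"
abbreviation powB :: "int \<Rightarrow> Rt mat2" where "powB \<equiv> zpow M2T M2Ti"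
abbreviation F1 :: "Rt mat2 set" where "F1 \<equiv> derived FF"
abbreviation F2 :: "Rt mat2 set" where "F2 \<equiv> derived F1"

lemmas powA_add = zpow_add[OF M1_inverse] and powB_add = zpow_add[OF M2T_inverse]

lemma generator_inverse_simps [simp]:
  "M1 * M1i = 1" "M1i * M1 = 1" "M2T * M2Ti = 1" "M2Ti * M2T = 1"
  "M1 * (M1i * y) = y" "M1i * (M1 * y) = y" "M2T * (M2Ti * y) = y" "M2Ti * (M2T * y) = y"
  "powA m * powA (- m) = 1" "powA (- m) * powA m = 1"
  "powB m * powB (- m) = 1" "powB (- m) * powB m = 1"
  "powA m * (powA (- m) * y) = y" "powA (- m) * (powA m * y) = y"
  "powB m * (powB (- m) * y) = y" "powB (- m) * (powB m * y) = y"
  using M1_inverse M2T_inverse zpow_inverse[OF M1_inverse] zpow_inverse[OF M2T_inverse]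
  by (simp_all flip: mult.assoc)

lemma inv_closed_submonoid_FF: "inv_closed_submonoid FF"
  unfolding FF_def by (rule inv_closed_submonoid_gen_grp) (use M1_inverse M2T_inverse in blast)

lemma FF_invertible:
  assumes "g \<in> FF" obtains g' where "g * g' = 1" "g' * g = 1"
proof -
  have "\<exists>y. x * y = 1 \<and> y * x = 1" if "x \<in> {M1, M2T}" for x
    using that M1_inverse M2T_inverse by blast
  from gen_grp_invertible[OF this] assms show ?thesis
    unfolding FF_def using that by blast
qed

lemma generators_FF: "M1 \<in> FF" "M2T \<in> FF" "M1i \<in> FF" "M2Ti \<in> FF"
  unfolding FF_def using M1_inverse M2T_inverse by (auto intro: gen_grp.gen gen_grp.inv)

lemma powA_FF: "powA m \<in> FF" and powB_FF: "powB m \<in> FF"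
  by (rule zpow_in[OF M1_inverse inv_closed_submonoid_FF generators_FF(1)],
      rule zpow_in[OF M2T_inverse inv_closed_submonoid_FF generators_FF(2)])

lemma F2_subset_F1: "F2 \<subseteq> F1" and F1_subset_FF: "F1 \<subseteq> FF"
  using derived_subset inv_closed_submonoid_derived inv_closed_submonoid_FF by blast+

lemma normalizes_FF_F1: "normalizes FF F1" and normalizes_FF_F2: "normalizes FF F2"
  using normalizes_derived normalizes_self[OF inv_closed_submonoid_FF] by blast+

lemma derived_series_2: "derived_series 2 FF = F2"
  by (simp add: derived_series_def numeral_2_eq_2)

lemma at1_F2: "g \<in> F2 \<Longrightarrow> at1 g = 1"
proof -
  have "at1 ` FF \<subseteq> gen_grp (at1 ` {M1, M2T})"
    unfolding FF_def by (rule image_gen_grp_subset[OF multiplicative_at1])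
  also have "\<dots> \<subseteq> proj_stabilizer Wrow Vcol"
    by (rule gen_grp_subset[OF inv_closed_submonoid_proj_stabilizer at1_generators_proj_stabilizer])
  finally have "at1 ` F1 \<subseteq> stabilizer Wrow Vcol"
    using image_derived_subset[OF multiplicative_at1, of FF]
      derived_mono derived_proj_stabilizer by blast
  then have "at1 ` F2 \<subseteq> derived (stabilizer Wrow Vcol)"
    using image_derived_subset[OF multiplicative_at1, of F1] derived_mono by blast
  also have "\<dots> \<subseteq> {1}"
    unfolding Wrow_def Vcol_def
    by (rule derived_commutative) (rule stabilizer_commute[OF xR_minus_one_nonzero])
  finally show "g \<in> F2 \<Longrightarrow> at1 g = 1" by blast
qed

section \<open>A normal form modulo F''\<close>

definition congF2 :: "Rt mat2 \<Rightarrow> Rt mat2 \<Rightarrow> bool" where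
  "congF2 g h \<longleftrightarrow> h \<in> FF \<and> (\<exists>n\<in>F2. g = n * h)"

lemma congF2_refl: "h \<in> FF \<Longrightarrow> congF2 h h"
  unfolding congF2_def
  by (auto intro!: bexI[of _ 1] simp: inv_closed_submonoid_one[OF inv_closed_submonoid_derived])

lemma congF2_trans [trans]:
  assumes "congF2 g h" "congF2 h k" shows "congF2 g k"
proof -
  from assms obtain n1 n2 where "n1 \<in> F2" "n2 \<in> F2" "g = n1 * h" "h = n2 * k" "k \<in> FF"
    by (auto simp: congF2_def)
  moreover from this have "n1 * n2 \<in> F2" "g = (n1 * n2) * k"
    by (simp_all add: inv_closed_submonoid_mult[OF inv_closed_submonoid_derived] mult.assoc)
  ultimately show ?thesis unfolding congF2_def by blast
qed

lemma congF2_mult: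
  assumes "congF2 g1 h1" "congF2 g2 h2" shows "congF2 (g1 * g2) (h1 * h2)"
proof -
  from assms obtain n1 n2 where n: "n1 \<in> F2" "n2 \<in> F2" "g1 = n1 * h1" "g2 = n2 * h2"
    and h: "h1 \<in> FF" "h2 \<in> FF"
    by (auto simp: congF2_def)
  obtain h1' where h1': "h1 * h1' = 1" "h1' * h1 = 1"
    using h(1) by (rule FF_invertible)
  have "h1 * n2 * h1' \<in> F2" by (rule normalizesD[OF normalizes_FF_F2 h(1) h1' n(2)])
  then have "n1 * (h1 * n2 * h1') \<in> F2"
    using n(1) by (rule inv_closed_submonoid_mult[OF inv_closed_submonoid_derived, rotated])
  moreover have "g1 * g2 = (n1 * (h1 * n2 * h1')) * (h1 * h2)"
    using n h1' by (simp add: mult.assoc) (simp flip: mult.assoc)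
  moreover have "h1 * h2 \<in> FF" using h by (rule inv_closed_submonoid_mult[OF inv_closed_submonoid_FF])
  ultimately show ?thesis unfolding congF2_def by blast
qed

lemma congF2_conj_F1:
  assumes "e \<in> F1" "u \<in> F1" "e * e' = 1" "e' * e = 1"
  shows "congF2 (e * u * e') u"
proof -
  obtain u' where u': "u * u' = 1" "u' * u = 1"
    using assms(2) F1_subset_FF by (blast intro: FF_invertible)
  have "e * u * e' * u' \<in> F2" by (rule commutator_in_derived[OF assms(1,2,3,4) u'])
  moreover have "e * u * e' = (e * u * e' * u') * u" using u' by (simp add: mult.assoc)
  ultimately show ?thesis using assms(2) F1_subset_FF unfolding congF2_def by blast
qed

lemma congF2_F2: "congF2 g h \<Longrightarrow> h \<in> F2 \<Longrightarrow> g \<in> F2"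
  unfolding congF2_def using inv_closed_submonoid_mult[OF inv_closed_submonoid_derived] by blast

definition basic_comm :: "bool \<Rightarrow> Rt mat2" where
  "basic_comm s = (if s then M1 * M2T * M1i * M2Ti else M2T * M1 * M2Ti * M1i)"

definition comm_conj :: "int \<times> int \<Rightarrow> bool \<Rightarrow> Rt mat2" where
  "comm_conj k s = powB (snd k) * powA (fst k) * basic_comm s * powA (- fst k) * powB (- snd k)"

lemma basic_comm_F1: "basic_comm s \<in> F1"
  unfolding basic_comm_def using generators_FF
  by (auto intro: commutator_in_derived)

lemma conj_F1:
  assumes "g \<in> FF" "g * g' = 1" "g' * g = 1" "u \<in> F1" shows "g * u * g' \<in> F1"
  by (rule normalizesD[OF normalizes_FF_F1 assms])

lemma comm_conj_F1: "comm_conj k s \<in> F1"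
proof -
  have "comm_conj k s = powB (snd k) * (powA (fst k) * basic_comm s * powA (- fst k)) * powB (- snd k)"
    by (simp add: comm_conj_def mult.assoc)
  then show ?thesis
    using conj_F1[OF powA_FF _ _ basic_comm_F1] conj_F1[OF powB_FF] by simp
qed

lemma comm_conj_inverse: "comm_conj k s * comm_conj k (\<not> s) = 1"
proof -
  have "basic_comm s * basic_comm (\<not> s) = 1"
    by (cases s) (simp_all add: basic_comm_def mult.assoc)
  moreover have "comm_conj k s * comm_conj k (\<not> s)
      = powB (snd k) * (powA (fst k) * (basic_comm s * basic_comm (\<not> s)) * powA (- fst k)) * powB (- snd k)"
    by (simp add: comm_conj_def mult.assoc)
  ultimately show ?thesis by simp
qed

definition comm_prod :: "((int \<times> int) \<times> bool) list \<Rightarrow> Rt mat2" where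
  "comm_prod L = prod_list (map (\<lambda>(k, s). comm_conj k s) L)"

lemma comm_prod_Nil [simp]: "comm_prod [] = 1"
  and comm_prod_Cons [simp]: "comm_prod ((k, s) # L) = comm_conj k s * comm_prod L"
  and comm_prod_append: "comm_prod (L1 @ L2) = comm_prod L1 * comm_prod L2"
  by (simp_all add: comm_prod_def)

lemma comm_prod_F1: "comm_prod L \<in> F1"
  by (induction L)
    (auto simp: inv_closed_submonoid_one[OF inv_closed_submonoid_derived]
      intro: inv_closed_submonoid_mult[OF inv_closed_submonoid_derived comm_conj_F1])

lemma comm_prod_FF: "comm_prod L \<in> FF"
  using comm_prod_F1 F1_subset_FF by blast

definition shiftB :: "int \<Rightarrow> ((int \<times> int) \<times> bool) list \<Rightarrow> ((int \<times> int) \<times> bool) list" where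
  "shiftB q L = map (\<lambda>((i, j), s). ((i, j + q), s)) L"

lemma comm_prod_conj_powB: "powB q * comm_prod L * powB (- q) = comm_prod (shiftB q L)"
proof (induction L)
  case Nil then show ?case by (simp add: shiftB_def)
next
  case (Cons x L)
  obtain i j s where x: "x = ((i, j), s)" by (metis prod.exhaust)
  have "powB q * comm_conj (i, j) s * powB (- q) = comm_conj (i, j + q) s"
    using powB_add[of q j] powB_add[of "- j" "- q"] by (simp add: comm_conj_def add.commute mult.assoc)
  moreover have "powB q * comm_prod (x # L) * powB (- q)
      = (powB q * comm_conj (i, j) s * powB (- q)) * (powB q * comm_prod L * powB (- q))"
    by (simp add: x mult.assoc)
  ultimately show ?case using Cons by (simp add: x shiftB_def)
qed

text \<open>Conjugating by a power of \<open>a\<close> shifts the first exponent, up to the commutator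
  of \<open>a\<^sup>p\<close> and \<open>b\<^sup>j\<close>, whose conjugation action is trivial modulo F''.\<close>

lemma comm_conj_conj_powA: "congF2 (powA p * comm_conj (i, j) s * powA (- p)) (comm_conj (i + p, j) s)"
proof -
  define e e' u X X' where "e = powA (- p) * powB (- j) * powA p * powB j"
    and "e' = powB (- j) * powA (- p) * powB j * powA p"
    and "u = powA i * basic_comm s * powA (- i)"
    and "X = powB j * powA p" and "X' = powA (- p) * powB (- j)"
  have "e \<in> F1" unfolding e_def by (rule commutator_in_derived[OF powA_FF powB_FF]) simp_all
  moreover have "u \<in> F1" unfolding u_def by (rule conj_F1[OF powA_FF _ _ basic_comm_F1]) simp_all
  moreover have "e * e' = 1" "e' * e = 1" unfolding e_def e'_def by (simp_all add: mult.assoc)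
  ultimately have "congF2 (e * u * e') u" by (rule congF2_conj_F1)
  then have "congF2 (X * (e * u * e') * X') (X * u * X')"
    unfolding X_def X'_def
    by (intro congF2_mult congF2_refl inv_closed_submonoid_mult[OF inv_closed_submonoid_FF] powA_FF powB_FF)
  moreover have "X * (e * u * e') * X' = powA p * comm_conj (i, j) s * powA (- p)"
    unfolding X_def X'_def e_def e'_def u_def comm_conj_def by (simp add: mult.assoc)
  moreover have "X * u * X' = comm_conj (i + p, j) s"
    using powA_add[of p i] powA_add[of "- i" "- p"]
    unfolding X_def X'_def u_def comm_conj_def by (simp add: add.commute mult.assoc)
  ultimately show ?thesis by simp
qed

definition genB :: "bool \<Rightarrow> Rt mat2" where "genB s = (if s then M2T else M2Ti)"
definition genB' :: "bool \<Rightarrow> Rt mat2" where "genB' s = (if s then M2Ti else M2T)"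

lemma genB_simps [simp]:
  "genB s * genB' s = 1" "genB' s * genB s = 1"
  "genB s * (genB' s * y) = y" "genB' s * (genB s * y) = y"
  by (cases s; simp add: genB_def genB'_def)+

definition comm_powA :: "int \<Rightarrow> bool \<Rightarrow> Rt mat2" where
  "comm_powA m s = powA (- m) * genB' s * powA m * genB s"

lemma comm_powA_step:
  assumes "d = 1 \<or> d = -1"
  shows "comm_powA (m + d) s = powA (- m) * comm_powA d s * powA m * comm_powA m s"
  using powA_add[of d m] powA_add[of "- m" "- d"]
  by (simp add: comm_powA_def add.commute mult.assoc)

lemma comm_powA_unit:
  "comm_powA 1 s = comm_conj (if s then (-1, -1) else (-1, 0)) s"
  "comm_powA (-1) s = comm_conj (if s then (0, -1) else (0, 0)) (\<not> s)"
  by (cases s; simp add: comm_powA_def comm_conj_def basic_comm_def genB_def genB'_def mult.assoc)+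

lemma comm_powA_normal_form: "\<exists>L. congF2 (comm_powA m s) (comm_prod L)"
proof (induction m rule: int_induct[where k = 0])
  case base
  have "comm_powA 0 s = comm_prod []" by (simp add: comm_powA_def)
  then show ?case using congF2_refl[OF comm_prod_FF] by metis
next
  case (step1 m)
  then obtain L where L: "congF2 (comm_powA m s) (comm_prod L)" by blast
  obtain i j where b: "comm_powA 1 s = comm_conj (i, j) s"
    using comm_powA_unit(1)[of s] by (cases s) auto
  have "congF2 (powA (- m) * comm_conj (i, j) s * powA (- (- m)) * comm_powA m s)
      (comm_conj (i + - m, j) s * comm_prod L)"
    by (intro congF2_mult[OF comm_conj_conj_powA L])
  then have "congF2 (comm_powA (m + 1) s) (comm_prod (((i + - m, j), s) # L))"
    using comm_powA_step[of 1 m s] b by simp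
  then show ?case by blast
next
  case (step2 m)
  then obtain L where L: "congF2 (comm_powA m s) (comm_prod L)" by blast
  obtain i j where b: "comm_powA (-1) s = comm_conj (i, j) (\<not> s)"
    using comm_powA_unit(2)[of s] by (cases s) auto
  have "congF2 (powA (- m) * comm_conj (i, j) (\<not> s) * powA (- (- m)) * comm_powA m s)
      (comm_conj (i + - m, j) (\<not> s) * comm_prod L)"
    by (intro congF2_mult[OF comm_conj_conj_powA L])
  then have "congF2 (comm_powA (m - 1) s) (comm_prod (((i + - m, j), \<not> s) # L))"
    using comm_powA_step[of "-1" m s] b by simp
  then show ?case by blast
qed

definition has_normal_form :: "Rt mat2 \<Rightarrow> bool" where
  "has_normal_form g \<longleftrightarrow> (\<exists>m n L. congF2 g (powA m * powB n * comm_prod L))"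

lemma has_normal_form_M1:
  assumes "has_normal_form g" shows "has_normal_form (M1 * g)" "has_normal_form (M1i * g)"
proof -
  from assms obtain m n L where g: "congF2 g (powA m * powB n * comm_prod L)"
    by (auto simp: has_normal_form_def)
  have "congF2 (M1 * g) (M1 * (powA m * powB n * comm_prod L))"
    by (rule congF2_mult[OF congF2_refl[OF generators_FF(1)] g])
  moreover have "M1 * (powA m * powB n * comm_prod L) = powA (m + 1) * powB n * comm_prod L"
    using powA_add[of 1 m] by (simp add: add.commute mult.assoc)
  ultimately show "has_normal_form (M1 * g)" unfolding has_normal_form_def by metis
  have "congF2 (M1i * g) (M1i * (powA m * powB n * comm_prod L))"
    by (rule congF2_mult[OF congF2_refl[OF generators_FF(3)] g])
  moreover have "M1i * (powA m * powB n * comm_prod L) = powA (m - 1) * powB n * comm_prod L"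
    using powA_add[of "-1" m] by (simp add: add.commute mult.assoc)
  ultimately show "has_normal_form (M1i * g)" unfolding has_normal_form_def by metis
qed

text \<open>Moving \<open>b\<^sup>\<plusminus>\<^sup>1\<close> past \<open>a\<^sup>m\<close> costs the commutator \<open>comm_powA m s\<close>, which lies in F'
  and is pushed to the right past \<open>b\<^sup>n\<close>.\<close>

lemma has_normal_form_genB':
  assumes "has_normal_form g" and d: "d = (if s then -1 else (1::int))"
  shows "has_normal_form (genB' s * g)"
proof -
  from assms(1) obtain m n L where g: "congF2 g (powA m * powB n * comm_prod L)"
    by (auto simp: has_normal_form_def)
  obtain L1 where L1: "congF2 (comm_powA m s) (comm_prod L1)" using comm_powA_normal_form by blast
  have B_FF: "genB' s \<in> FF" using generators_FF by (simp add: genB'_def)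
  have Bd: "powB (n + d) = genB' s * powB n"
    using powB_add[of d n] d by (cases s) (simp_all add: genB'_def add.commute)
  have "congF2 (genB' s * g) (genB' s * (powA m * powB n * comm_prod L))"
    by (rule congF2_mult[OF congF2_refl[OF B_FF] g])
  also have "genB' s * (powA m * powB n * comm_prod L) = powA m * comm_powA m s * powB (n + d) * comm_prod L"
    unfolding Bd comm_powA_def by (simp add: mult.assoc)
  also have "congF2 \<dots> (powA m * comm_prod L1 * powB (n + d) * comm_prod L)"
    by (intro congF2_mult congF2_refl L1 powA_FF powB_FF comm_prod_FF)
  also have "powA m * comm_prod L1 * powB (n + d) * comm_prod L
      = powA m * powB (n + d) * comm_prod (shiftB (- (n + d)) L1 @ L)"
    using comm_prod_conj_powB[of "- (n + d)" L1, symmetric]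
    by (simp only: minus_minus comm_prod_append mult.assoc generator_inverse_simps)
  finally have "congF2 (genB' s * g) (powA m * powB (n + d) * comm_prod (shiftB (- (n + d)) L1 @ L))" .
  then show ?thesis unfolding has_normal_form_def by blast
qed

lemma normal_form:
  assumes "g \<in> FF" shows "\<exists>m n L. congF2 g (powA m * powB n * comm_prod L)"
proof -
  have "\<forall>x. has_normal_form x \<longrightarrow> has_normal_form (h * x)" if "h \<in> gen_grp {M1, M2T}" for h
    using that
  proof induction
    case (gen x)
    then show ?case
      using has_normal_form_M1(1) has_normal_form_genB'[where s = False] by (auto simp: genB'_def)
  next
    case (inv x y)
    then have "y = M1i \<or> y = M2Ti" using M1_inverse M2T_inverse inverse_unique by blast
    then show ?case
      using has_normal_form_M1(2) has_normal_form_genB'[where s = True] by (auto simp: genB'_def)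
  qed (simp_all add: mult.assoc)
  moreover have "has_normal_form 1"
    unfolding has_normal_form_def
    by (intro exI[of _ 0] exI[of _ "[]"])
      (simp add: congF2_refl inv_closed_submonoid_one[OF inv_closed_submonoid_FF])
  ultimately have "has_normal_form (g * 1)" using assms unfolding FF_def by blast
  then show ?thesis by (simp add: has_normal_form_def)
qed

section \<open>F'' is the kernel of evaluation at t = 1\<close>

lemma at1_pow_eigen:
  "Wrow * at1 (powA i) = Wrow" "at1 (powA i) * Vcol = smat (Poly_Mapping.single (i, 0) 1) * Vcol"
  "Wrow * at1 (powB j) = Wrow" "at1 (powB j) * Vcol = smat (Poly_Mapping.single (0, j) 1) * Vcol"
  unfolding multiplicative_zpow[OF multiplicative_at1]
  by (simp_all only: zpow_fixes[OF at1_inverse(1,2) eigen_M1(1)] zpow_fixes[OF at1_inverse(3,4) eigen_M2T(1)]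
      zpow_scales[OF at1_inverse(1,2) xR_inverse eigen_M1(2)] zpow_scales[OF at1_inverse(3,4) yR_inverse eigen_M2T(2)]
      zpow_xR zpow_yR)

lemma conj_one_minus_Emat:
  assumes "Wrow * P = Wrow" "P * Vcol = smat l * Vcol" "P * P' = 1"
  shows "P * (1 - smat e * Emat) * P' = 1 - smat (e * l) * Emat"
proof -
  have EP: "Emat * P' = Emat" and PE: "P * Emat = smat l * Emat"
    by (rule Emat_fixes[OF fixes_inverse[OF assms(1,3)]], rule Emat_scales[OF assms(2)])
  have "P * (smat e * Emat) * P' = smat e * (P * (Emat * P'))"
    by (simp only: mult_smat_left_commute[of P] mult.assoc)
  also have "\<dots> = smat (e * l) * Emat"
    by (simp only: EP PE smat_mult mult.assoc)
  finally have "P * (smat e * Emat) * P' = smat (e * l) * Emat" .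
  moreover have "P * (1 - smat e * Emat) * P' = P * P' - P * (smat e * Emat) * P'"
    by (simp add: algebra_simps)
  ultimately show ?thesis by (simp add: assms(3))
qed

definition signed_monomial :: "int \<times> int \<Rightarrow> bool \<Rightarrow> R" where
  "signed_monomial k s = (if s then Poly_Mapping.single k 1 else - Poly_Mapping.single k 1)"

lemma at1_comm_conj: "at1 (comm_conj (i, j) s) = 1 - smat (signed_monomial (i, j) s) * Emat"
proof -
  define P P' where "P = at1 (powB j) * at1 (powA i)" and "P' = at1 (powA (- i)) * at1 (powB (- j))"
  have "Wrow * P = Wrow"
    by (simp add: P_def at1_pow_eigen flip: mult.assoc)
  moreover have "P * Vcol = smat (Poly_Mapping.single (i, j) 1) * Vcol"
    using scales_mult[OF at1_pow_eigen(4,2), of j i] by (simp add: P_def mult_single)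
  moreover have "P * P' = 1"
    unfolding P_def P'_def by (simp add: mult.assoc flip: at1_mult)
  moreover have "at1 (comm_conj (i, j) s) = P * at1 (basic_comm s) * P'"
    by (simp add: comm_conj_def at1_mult P_def P'_def mult.assoc)
  moreover have "at1 (basic_comm s) = 1 - smat (if s then 1 else -1) * Emat"
    by (simp add: basic_comm_def at1_commutator at1_commutator' smat_uminus)
  ultimately have "at1 (comm_conj (i, j) s)
      = 1 - smat ((if s then 1 else -1) * Poly_Mapping.single (i, j) 1) * Emat"
    by (simp only: conj_one_minus_Emat)
  then show ?thesis by (simp add: signed_monomial_def)
qed

definition comm_weight :: "((int \<times> int) \<times> bool) list \<Rightarrow> R" where
  "comm_weight L = sum_list (map (\<lambda>(k, s). signed_monomial k s) L)"

lemma comm_weight_Nil [simp]: "comm_weight [] = 0"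
  and comm_weight_Cons [simp]: "comm_weight ((k, s) # L) = signed_monomial k s + comm_weight L"
  and comm_weight_append: "comm_weight (L1 @ L2) = comm_weight L1 + comm_weight L2"
  by (simp_all add: comm_weight_def)

text \<open>The \<open>1 - c E\<close> form a group isomorphic to \<open>(R, +)\<close> since \<open>E\<^sup>2 = 0\<close>.\<close>

lemma at1_comm_prod: "at1 (comm_prod L) = 1 - smat (comm_weight L) * Emat"
proof (induction L)
  case (Cons x L)
  obtain k s where x: "x = (k, s)" by (cases x)
  obtain i j where k: "k = (i, j)" by (cases k)
  define a b where "a = signed_monomial (i, j) s" and "b = comm_weight L"
  have "(smat a * Emat) * (smat b * Emat) = smat a * (Emat * Emat) * smat b"
    by (simp only: smat_commute[of b Emat] mult.assoc)
  then have square: "(smat a * Emat) * (smat b * Emat) = 0"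
    by (simp add: Emat_square)
  have "at1 (comm_prod (x # L)) = (1 - smat a * Emat) * (1 - smat b * Emat)"
    by (simp add: x k at1_mult at1_comm_conj Cons a_def b_def)
  also have "\<dots> = 1 - (smat a * Emat + smat b * Emat) + (smat a * Emat) * (smat b * Emat)"
    by (simp add: algebra_simps)
  also have "\<dots> = 1 - smat (comm_weight (x # L)) * Emat"
    unfolding square by (simp add: x k a_def b_def smat_add distrib_right)
  finally show ?case .
qed simp

lemma det2_at1_powA: "det2 (at1 (powA m)) = Poly_Mapping.single (m, 0) 1"
  and det2_at1_powB: "det2 (at1 (powB m)) = Poly_Mapping.single (0, m) 1"
proof -
  have h: "multiplicative (det2 \<circ> at1)"
    by (rule multiplicative_comp[OF multiplicative_det2 multiplicative_at1])
  have x: "det2 (at1 M1) = xR" and y: "det2 (at1 M2T) = yR"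
    by (simp_all add: at1_M1 at1_M2T det2_def)
  have "xR * det2 (at1 M1i) = 1" "yR * det2 (at1 M2Ti) = 1"
    using det2_mult[of "at1 M1" "at1 M1i"] det2_mult[of "at1 M2T" "at1 M2Ti"]
    by (simp_all add: x y at1_inverse)
  from inverse_unique[OF this(1) xR_inverse(2)] inverse_unique[OF this(2) yR_inverse(2)]
  have xi: "det2 (at1 M1i) = xiR" and yi: "det2 (at1 M2Ti) = yiR" .
  show "det2 (at1 (powA m)) = Poly_Mapping.single (m, 0) 1"
    using multiplicative_zpow[OF h, of M1 M1i m] by (simp only: o_apply x xi zpow_xR)
  show "det2 (at1 (powB m)) = Poly_Mapping.single (0, m) 1"
    using multiplicative_zpow[OF h, of M2T M2Ti m] by (simp only: o_apply y yi zpow_yR)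
qed

lemma det2_one_minus_Emat: "det2 (1 - smat t * Emat) = 1"
  unfolding Emat_def Wrow_def Vcol_def smat_def mat2_one det2_def
  by (simp only: times_mat2.simps minus_mat2.simps mat2.case) algebra

lemma smat_Emat_eq_zero: "smat t * Emat = 0 \<Longrightarrow> t = 0"
  using xR_minus_one_nonzero
  by (simp add: smat_def Emat_def Wrow_def Vcol_def mat2_zero)

lemma lookup_comm_weight:
  assumes "(k, \<not> s) \<notin> set L"
  shows "Poly_Mapping.lookup (comm_weight L) k = (if s then 1 else -1) * int (length (filter (\<lambda>x. fst x = k) L))"
  using assms
proof (induction L)
  case (Cons x L)
  obtain k' s' where x: "x = (k', s')" by (cases x)
  show ?case
  proof (cases "k' = k")
    case True
    then have "s' = s" using Cons.prems x by (cases s; cases s') auto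
    then show ?thesis using Cons True x
      by (simp add: lookup_add signed_monomial_def lookup_single algebra_simps)
  next
    case False
    then show ?thesis using Cons x by (simp add: lookup_add signed_monomial_def lookup_single)
  qed
qed simp

text \<open>A product of conjugates of the basic commutator with vanishing weight lies in F'':
  its weight has a nonzero coefficient unless some factor meets its inverse, and
  inverse factors cancel modulo F'' because F'/F'' is abelian.\<close>

lemma comm_prod_F2: "comm_weight L = 0 \<Longrightarrow> comm_prod L \<in> F2"
proof (induction "length L" arbitrary: L rule: less_induct)
  case less
  show ?case
  proof (cases L)
    case Nil then show ?thesis by (simp add: inv_closed_submonoid_one[OF inv_closed_submonoid_derived])
  next
    case (Cons x L')
    obtain k s where x: "x = (k, s)" by (cases x)
    have "(k, \<not> s) \<in> set L'"
    proof (rule ccontr)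
      assume "(k, \<not> s) \<notin> set L'"
      then have "Poly_Mapping.lookup (comm_weight L) k
          = (if s then 1 else -1) * (1 + int (length (filter (\<lambda>x. fst x = k) L')))"
        using lookup_comm_weight Cons x
        by (simp add: lookup_add signed_monomial_def lookup_single algebra_simps)
      with less.prems show False by (cases s) simp_all
    qed
    then obtain L1 L2 where L': "L' = L1 @ (k, \<not> s) # L2" by (meson split_list)
    have "comm_weight L = (signed_monomial k s + signed_monomial k (\<not> s)) + comm_weight (L1 @ L2)"
      using Cons x L' by (simp add: comm_weight_append algebra_simps)
    then have "comm_weight (L1 @ L2) = 0"
      using less.prems by (cases s) (simp_all add: signed_monomial_def)
    then have "comm_prod (L1 @ L2) \<in> F2" by (rule less.hyps[rotated]) (simp add: Cons L')
    moreover have "congF2 (comm_conj k s * comm_prod L1 * comm_conj k (\<not> s) * comm_prod L2)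
        (comm_prod L1 * comm_prod L2)"
      using comm_conj_inverse[of k s] comm_conj_inverse[of k "\<not> s"]
      by (intro congF2_mult congF2_conj_F1 congF2_refl comm_conj_F1 comm_prod_F1 comm_prod_FF) simp_all
    moreover have "comm_prod L = comm_conj k s * comm_prod L1 * comm_conj k (\<not> s) * comm_prod L2"
      using Cons x L' by (simp add: comm_prod_append mult.assoc)
    ultimately show ?thesis by (simp add: comm_prod_append congF2_F2)
  qed
qed

lemma at1_eq_one_F2:
  assumes "g \<in> FF" "at1 g = 1" shows "g \<in> F2"
proof -
  obtain m n L where "congF2 g (powA m * powB n * comm_prod L)" using normal_form[OF assms(1)] by blast
  then obtain \<nu> where \<nu>: "\<nu> \<in> F2" "g = \<nu> * (powA m * powB n * comm_prod L)" by (auto simp: congF2_def)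
  then have at1_nf: "at1 (powA m * powB n * comm_prod L) = 1"
    using assms(2) at1_F2 by (simp add: at1_mult)
  have "det2 (at1 (powA m * powB n * comm_prod L))
      = Poly_Mapping.single (m, 0) 1 * Poly_Mapping.single (0, n) 1"
    by (simp only: at1_mult det2_mult det2_at1_powA det2_at1_powB at1_comm_prod
        det2_one_minus_Emat mult_1_right)
  with at1_nf have "Poly_Mapping.single (m, 0) 1 * Poly_Mapping.single (0, n) 1 = (1 :: R)"
    by simp
  then have "Poly_Mapping.lookup (Poly_Mapping.single (m, n) (1::int)) (m, n) = Poly_Mapping.lookup (1::R) (m, n)"
    by (simp add: mult_single)
  then have mn: "m = 0" "n = 0"
    by (auto simp: lookup_single when_def simp flip: single_zero_one split: if_splits)
  with at1_nf have "smat (comm_weight L) * Emat = 0"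
    by (simp add: at1_comm_prod)
  then have "comm_prod L \<in> F2" by (intro comm_prod_F2 smat_Emat_eq_zero)
  with \<nu> mn show ?thesis using inv_closed_submonoid_mult[OF inv_closed_submonoid_derived] by simp
qed

section \<open>Ideal powers and congruence subgroups over power series\<close>

lemma ideal_pow_zero: "0 \<in> ideal_pow I n"
  by (cases n) (simp_all add: ideal_pow_step.zero)

lemma ideal_pow_add: "u \<in> ideal_pow I n \<Longrightarrow> v \<in> ideal_pow I n \<Longrightarrow> u + v \<in> ideal_pow I n"
  by (cases n) (simp_all add: ideal_pow_step.add)

lemma ideal_pow_sum: "(\<And>a. a \<in> A \<Longrightarrow> f a \<in> ideal_pow I n) \<Longrightarrow> sum f A \<in> ideal_pow I n"
  by (induction A rule: infinite_finite_induct) (auto intro: ideal_pow_zero ideal_pow_add)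

context
  fixes I :: "'a::comm_ring_1 set"
  assumes ideal: "\<And>r a. a \<in> I \<Longrightarrow> r * a \<in> I"
begin

lemma ideal_pow_mult_left: "u \<in> ideal_pow I n \<Longrightarrow> r * u \<in> ideal_pow I n"
proof (cases n)
  case (Suc m)
  assume "u \<in> ideal_pow I n"
  then have "u \<in> ideal_pow_step I (ideal_pow I m)" using Suc by simp
  then have "r * u \<in> ideal_pow_step I (ideal_pow I m)"
  proof induction
    case (prod a b)
    then have "(r * a) * b \<in> ideal_pow_step I (ideal_pow I m)"
      by (intro ideal_pow_step.prod ideal)
    then show ?case by (simp add: mult.assoc)
  qed (simp_all add: distrib_left ideal_pow_step.zero ideal_pow_step.add)
  then show ?thesis using Suc by simp
qed simp

lemma ideal_pow_uminus: "u \<in> ideal_pow I n \<Longrightarrow> - u \<in> ideal_pow I n"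
  using ideal_pow_mult_left[of u n "-1"] by simp

lemma ideal_pow_diff: "u \<in> ideal_pow I n \<Longrightarrow> v \<in> ideal_pow I n \<Longrightarrow> u - v \<in> ideal_pow I n"
  using ideal_pow_add[of u I n "- v"] ideal_pow_uminus by simp

lemma ideal_pow_mult:
  "u \<in> ideal_pow I a \<Longrightarrow> w \<in> ideal_pow I b \<Longrightarrow> u * w \<in> ideal_pow I (a + b)"
proof (induction a arbitrary: u)
  case 0 then show ?case using ideal_pow_mult_left by simp
next
  case (Suc a)
  from Suc.prems(1) have "u \<in> ideal_pow_step I (ideal_pow I a)" by simp
  then have "u * w \<in> ideal_pow_step I (ideal_pow I (a + b))"
  proof induction
    case (prod x y)
    then have "x * (y * w) \<in> ideal_pow_step I (ideal_pow I (a + b))"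
      using Suc.IH Suc.prems(2) by (intro ideal_pow_step.prod)
    then show ?case by (simp add: mult.assoc)
  qed (simp_all add: distrib_right ideal_pow_step.zero ideal_pow_step.add)
  then show ?case by simp
qed

lemma ideal_pow_one: "a \<in> I \<Longrightarrow> a \<in> ideal_pow I 1"
  using ideal_pow_step.prod[of a I 1 UNIV] by simp

end

definition fps_filt :: "'a::comm_ring_1 set \<Rightarrow> nat \<Rightarrow> 'a fps set" where
  "fps_filt I d = {f. (\<forall>i<d. fps_nth f i = 0) \<and> (\<forall>i. fps_nth f i \<in> ideal_pow I d)}"

lemma fps_filt_zero: "0 \<in> fps_filt I d"
  by (simp add: fps_filt_def ideal_pow_zero)

lemma fps_filt_add: "f \<in> fps_filt I d \<Longrightarrow> g \<in> fps_filt I d \<Longrightarrow> f + g \<in> fps_filt I d"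
  by (simp add: fps_filt_def ideal_pow_add)

context
  fixes I :: "'a::comm_ring_1 set"
  assumes ideal: "\<And>r a. a \<in> I \<Longrightarrow> r * a \<in> I"
begin

lemma fps_filt_diff: "f \<in> fps_filt I d \<Longrightarrow> g \<in> fps_filt I d \<Longrightarrow> f - g \<in> fps_filt I d"
  by (simp add: fps_filt_def ideal_pow_diff[OF ideal])

lemma fps_filt_uminus: "f \<in> fps_filt I d \<Longrightarrow> - f \<in> fps_filt I d"
  using fps_filt_diff[OF fps_filt_zero] by simp

lemma fps_filt_mult_left: "f \<in> fps_filt I d \<Longrightarrow> h * f \<in> fps_filt I d"
proof -
  assume f: "f \<in> fps_filt I d"
  have "fps_nth (h * f) n = 0" if "n < d" for n
    unfolding fps_mult_nth using f that by (intro sum.neutral) (auto simp: fps_filt_def)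
  moreover have "fps_nth (h * f) n \<in> ideal_pow I d" for n
    unfolding fps_mult_nth using f
    by (intro ideal_pow_sum ideal_pow_mult_left[OF ideal]) (auto simp: fps_filt_def)
  ultimately show ?thesis by (simp add: fps_filt_def)
qed

lemma fps_filt_mult_right: "f \<in> fps_filt I d \<Longrightarrow> f * h \<in> fps_filt I d"
  using fps_filt_mult_left[of f d h] by (simp add: mult.commute)

lemma fps_filt_mult: "f \<in> fps_filt I d \<Longrightarrow> h \<in> fps_filt I e \<Longrightarrow> f * h \<in> fps_filt I (d + e)"
proof -
  assume f: "f \<in> fps_filt I d" and h: "h \<in> fps_filt I e"
  have "fps_nth (f * h) n = 0" if "n < d + e" for n
    unfolding fps_mult_nth
  proof (intro sum.neutral ballI)
    fix i assume "i \<in> {0..n}"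
    then have "i \<le> n" by simp
    show "fps_nth f i * fps_nth h (n - i) = 0"
    proof (cases "i < d")
      case True then show ?thesis using f by (simp add: fps_filt_def)
    next
      case False then have "n - i < e" using that \<open>i \<le> n\<close> by arith
      then show ?thesis using h by (simp add: fps_filt_def)
    qed
  qed
  moreover have "fps_nth (f * h) n \<in> ideal_pow I (d + e)" for n
    unfolding fps_mult_nth using f h
    by (intro ideal_pow_sum ideal_pow_mult[OF ideal]) (auto simp: fps_filt_def)
  ultimately show ?thesis by (simp add: fps_filt_def)
qed

lemma fps_filt_one: "fps_nth f 0 = 0 \<Longrightarrow> (\<And>i. fps_nth f i \<in> I) \<Longrightarrow> f \<in> fps_filt I 1"
  using ideal_pow_one[OF ideal] by (auto simp: fps_filt_def)

end

definition congruence_subgroup :: "'a::comm_ring_1 set \<Rightarrow> nat \<Rightarrow> 'a fps mat2 set" where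
  "congruence_subgroup I d = {M. mat2_entries (M - 1) \<subseteq> fps_filt I d}"

context
  fixes I :: "'a::comm_ring_1 set"
  assumes ideal: "\<And>r a. a \<in> I \<Longrightarrow> r * a \<in> I"
begin

lemma entries_filt_mult_left:
  "mat2_entries B \<subseteq> fps_filt I d \<Longrightarrow> mat2_entries (A * B) \<subseteq> fps_filt I d"
  by (cases A; cases B) (simp add: fps_filt_add fps_filt_mult_left[OF ideal])

lemma entries_filt_mult_right:
  "mat2_entries A \<subseteq> fps_filt I d \<Longrightarrow> mat2_entries (A * B) \<subseteq> fps_filt I d"
  by (cases A; cases B) (simp add: fps_filt_add fps_filt_mult_right[OF ideal])

lemma entries_filt_mult:
  "mat2_entries A \<subseteq> fps_filt I d \<Longrightarrow> mat2_entries B \<subseteq> fps_filt I e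
    \<Longrightarrow> mat2_entries (A * B) \<subseteq> fps_filt I (d + e)"
  by (cases A; cases B) (simp add: fps_filt_add fps_filt_mult[OF ideal])

lemma entries_filt_add:
  "mat2_entries A \<subseteq> fps_filt I d \<Longrightarrow> mat2_entries B \<subseteq> fps_filt I d
    \<Longrightarrow> mat2_entries (A + B) \<subseteq> fps_filt I d"
  by (cases A; cases B) (simp add: fps_filt_add)

lemma entries_filt_diff:
  "mat2_entries A \<subseteq> fps_filt I d \<Longrightarrow> mat2_entries B \<subseteq> fps_filt I d
    \<Longrightarrow> mat2_entries (A - B) \<subseteq> fps_filt I d"
  by (cases A; cases B) (simp add: fps_filt_diff[OF ideal])

lemma entries_filt_uminus: "mat2_entries A \<subseteq> fps_filt I d \<Longrightarrow> mat2_entries (- A) \<subseteq> fps_filt I d"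
  by (cases A) (simp add: fps_filt_uminus[OF ideal])

lemma inv_closed_submonoid_congruence_subgroup: "inv_closed_submonoid (congruence_subgroup I d)"
proof (rule inv_closed_submonoidI)
  fix A B assume "A \<in> congruence_subgroup I d" "B \<in> congruence_subgroup I d"
  then have "mat2_entries ((A - 1) + (B - 1) + (A - 1) * (B - 1)) \<subseteq> fps_filt I d"
    unfolding congruence_subgroup_def by (simp add: entries_filt_add entries_filt_mult_left)
  moreover have "(A - 1) + (B - 1) + (A - 1) * (B - 1) = A * B - 1"
    by (simp add: algebra_simps)
  ultimately show "A * B \<in> congruence_subgroup I d"
    by (simp add: congruence_subgroup_def)
next
  fix A A' assume "A \<in> congruence_subgroup I d" "A * A' = 1"
  then have "mat2_entries (- ((A - 1) * A')) \<subseteq> fps_filt I d"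
    unfolding congruence_subgroup_def by (simp add: entries_filt_uminus entries_filt_mult_right)
  moreover have "- ((A - 1) * A') = A' - 1"
    using \<open>A * A' = 1\<close> by (simp add: algebra_simps)
  ultimately show "A' \<in> congruence_subgroup I d"
    by (simp add: congruence_subgroup_def)
qed (simp add: congruence_subgroup_def mat2_zero fps_filt_zero)

text \<open>The commutator of \<open>A = 1 + N\<^sub>1\<close> and \<open>B = 1 + N\<^sub>2\<close> is \<open>1 + (N\<^sub>1 N\<^sub>2 - N\<^sub>2 N\<^sub>1) A\<^sup>-\<^sup>1 B\<^sup>-\<^sup>1\<close>.\<close>

lemma commutators_congruence_subgroup:
  "commutators (congruence_subgroup I d) \<subseteq> congruence_subgroup I (d + d)"
proof
  fix c assume "c \<in> commutators (congruence_subgroup I d)"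
  then obtain A B A' B' where c: "c = A * B * A' * B'"
    and AB: "A \<in> congruence_subgroup I d" "B \<in> congruence_subgroup I d"
    and inv: "A * A' = 1" "B * B' = 1"
    by (auto simp: commutators_def)
  have "c - 1 = (A * B - B * A) * (A' * B')"
  proof -
    have "(A * B - B * A) * (A' * B') = A * B * A' * B' - B * (A * A') * B'"
      by (simp add: algebra_simps)
    then show ?thesis by (simp add: c inv)
  qed
  also have "A * B - B * A = (A - 1) * (B - 1) - (B - 1) * (A - 1)"
    by (simp add: algebra_simps)
  finally show "c \<in> congruence_subgroup I (d + d)"
    using AB unfolding congruence_subgroup_def
    by (simp add: entries_filt_mult_right entries_filt_diff entries_filt_mult)
qed

lemma derived_congruence_subgroup:
  "derived (congruence_subgroup I d) \<subseteq> congruence_subgroup I (2 * d)"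
  unfolding derived_def mult_2
  by (rule gen_grp_subset[OF inv_closed_submonoid_congruence_subgroup commutators_congruence_subgroup])

end

lemma congruence_subgroup_coeffs:
  assumes "M \<in> congruence_subgroup I d" "1 \<le> d"
  shows "mat2_map (\<lambda>f. fps_nth f 0) M = 1"
    and "1 \<le> i \<Longrightarrow> i < d \<Longrightarrow> mat2_map (\<lambda>f. fps_nth f i) M = M2 0 0 0 0"
    and "d \<le> i \<Longrightarrow> mat2_entries (mat2_map (\<lambda>f. fps_nth f i) M) \<subseteq> ideal_pow I d"
proof -
  obtain p q r s where M: "M = M2 p q r s" by (cases M)
  have filt: "p - 1 \<in> fps_filt I d" "q \<in> fps_filt I d" "r \<in> fps_filt I d" "s - 1 \<in> fps_filt I d"
    using assms(1) by (simp_all add: congruence_subgroup_def M mat2_one)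
  then show "mat2_map (\<lambda>f. fps_nth f 0) M = 1"
    using assms(2) by (simp add: fps_filt_def M mat2_one)
  show "1 \<le> i \<Longrightarrow> i < d \<Longrightarrow> mat2_map (\<lambda>f. fps_nth f i) M = M2 0 0 0 0"
    using filt by (simp add: fps_filt_def M)
  assume "d \<le> i"
  then have "i \<noteq> 0" using assms(2) by simp
  moreover have "fps_nth (p - 1) i \<in> ideal_pow I d" "fps_nth q i \<in> ideal_pow I d"
    "fps_nth r i \<in> ideal_pow I d" "fps_nth (s - 1) i \<in> ideal_pow I d"
    using filt unfolding fps_filt_def by blast+
  ultimately show "mat2_entries (mat2_map (\<lambda>f. fps_nth f i) M) \<subseteq> ideal_pow I d"
    by (simp add: M)
qed

section \<open>The filtration of the derived series\<close>

definition emb_mat :: "Rt mat2 \<Rightarrow> R fps mat2" where "emb_mat = mat2_map emb_fps"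

lemma multiplicative_emb_mat: "multiplicative emb_mat"
  unfolding emb_mat_def by (rule multiplicative_mat2_map) (simp_all add: emb_fps_add emb_fps_mult)

lemma coeff_mat_emb_mat: "coeff_mat g i = mat2_map (\<lambda>f. fps_nth f i) (emb_mat g)"
  by (cases g) (simp add: coeff_mat_def emb_mat_def)

definition aug_fps :: "R fps \<Rightarrow> int fps" where "aug_fps f = Abs_fps (\<lambda>n. augR (fps_nth f n))"

lemma aug_fps_nth [simp]: "fps_nth (aug_fps f) n = augR (fps_nth f n)"
  by (simp add: aug_fps_def)

lemma aug_fps_add: "aug_fps (f + g) = aug_fps f + aug_fps g"
  and aug_fps_diff: "aug_fps (f - g) = aug_fps f - aug_fps g"
  and aug_fps_mult: "aug_fps (f * g) = aug_fps f * aug_fps g"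
  and aug_fps_zero: "aug_fps 0 = 0"
  and aug_fps_one: "aug_fps 1 = 1"
  and aug_fps_const: "aug_fps (fps_const r) = fps_const (augR r)"
  by (rule fps_ext; simp add: augR_add augR_diff fps_mult_nth augR_sum augR_mult)+

definition aug_mat :: "Rt mat2 \<Rightarrow> int fps mat2" where "aug_mat g = mat2_map aug_fps (emb_mat g)"

lemma multiplicative_aug_mat: "multiplicative aug_mat"
proof -
  have "multiplicative (mat2_map aug_fps)"
    by (rule multiplicative_mat2_map) (simp_all add: aug_fps_add aug_fps_mult aug_fps_zero aug_fps_one)
  then show ?thesis
    using multiplicative_comp[OF _ multiplicative_emb_mat] by (simp add: aug_mat_def[abs_def] comp_def)
qed

definition affine_mats :: "'a::comm_ring_1 mat2 set" where
  "affine_mats = {M2 u 0 (1 - u) 1 | u. True}"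

lemma inv_closed_submonoid_affine_mats: "inv_closed_submonoid (affine_mats :: 'a::comm_ring_1 mat2 set)"
proof (rule inv_closed_submonoidI)
  show "1 \<in> affine_mats" unfolding affine_mats_def mat2_one by force
next
  fix A B :: "'a mat2" assume "A \<in> affine_mats" "B \<in> affine_mats"
  then obtain u w where "A = M2 u 0 (1 - u) 1" "B = M2 w 0 (1 - w) 1" by (auto simp: affine_mats_def)
  then have "A * B = M2 (u * w) 0 (1 - u * w) 1" by (simp add: algebra_simps)
  then show "A * B \<in> affine_mats" unfolding affine_mats_def by blast
next
  fix A A' :: "'a mat2" assume "A \<in> affine_mats" "A * A' = 1" "A' * A = 1"
  moreover obtain p q r s where A': "A' = M2 p q r s" by (cases A')
  moreover from calculation obtain u where A: "A = M2 u 0 (1 - u) 1" by (auto simp: affine_mats_def)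
  ultimately have "q = 0" "s = 1" "u * p = 1" "(1 - u) * p + r = 0"
    by (simp_all add: mat2_one)
  then have "A' = M2 p 0 (1 - p) 1" by (simp add: A' algebra_simps eq_neg_iff_add_eq_0 [symmetric])
  then show "A' \<in> affine_mats" unfolding affine_mats_def by blast
qed

lemma affine_mats_commute: "A \<in> affine_mats \<Longrightarrow> B \<in> affine_mats \<Longrightarrow> A * B = B * A"
  for A B :: "'a::comm_ring_1 mat2"
  unfolding affine_mats_def by (auto simp: algebra_simps)

lemma aug_mat_F1: "g \<in> F1 \<Longrightarrow> aug_mat g = 1"
proof -
  have "aug_mat M1 = M2 1 0 (1 - 1) 1"
    "aug_mat M2T = M2 (aug_fps (1 + fps_X)) 0 (1 - aug_fps (1 + fps_X)) 1"
    by (simp_all add: aug_mat_def emb_mat_def M1_def M2T_def emb_fps_mult emb_fps_diff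
        aug_fps_mult aug_fps_diff aug_fps_add aug_fps_const aug_fps_one aug_fps_zero augR_diff)
  then have "aug_mat ` {M1, M2T} \<subseteq> affine_mats" unfolding affine_mats_def by blast
  then have "aug_mat ` FF \<subseteq> affine_mats"
    using image_gen_grp_subset[OF multiplicative_aug_mat, of "{M1, M2T}"]
      gen_grp_subset[OF inv_closed_submonoid_affine_mats]
    unfolding FF_def by blast
  then have "aug_mat ` F1 \<subseteq> derived affine_mats"
    using image_derived_subset[OF multiplicative_aug_mat, of FF] derived_mono by blast
  also have "\<dots> \<subseteq> {1}" by (rule derived_commutative) (rule affine_mats_commute)
  finally show "g \<in> F1 \<Longrightarrow> aug_mat g = 1" by blast
qed

lemma Sigma_aug_ideal: "a \<in> Sigma_aug \<Longrightarrow> r * a \<in> Sigma_aug"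
  by (simp add: Sigma_aug_def augR_mult)

text \<open>On F'' both the value at t = 1 and the augmentation are trivial, so every entry of
  \<open>g - 1\<close> has vanishing constant term and coefficients in \<open>\<Sigma>\<close>.\<close>

lemma emb_mat_F2: "g \<in> F2 \<Longrightarrow> emb_mat g \<in> congruence_subgroup Sigma_aug 1"
proof -
  assume g: "g \<in> F2"
  have filt: "f \<in> fps_filt Sigma_aug 1" if "fps_nth f 0 = 0" "aug_fps f = 0" for f
  proof (rule fps_filt_one[OF Sigma_aug_ideal that(1)])
    fix i show "fps_nth f i \<in> Sigma_aug"
      using arg_cong[OF that(2), of "\<lambda>h. fps_nth h i"] by (simp add: Sigma_aug_def)
  qed
  obtain p q r s where gs: "g = M2 p q r s" by (cases g)
  have "at1 g = 1" using at1_F2[OF g] .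
  then have "eval1 p = 1" "eval1 q = 0" "eval1 r = 0" "eval1 s = 1"
    by (simp_all add: gs at1_def mat2_one)
  moreover have "aug_mat g = 1" using aug_mat_F1 g F2_subset_F1 by blast
  then have "aug_fps (emb_fps p) = 1" "aug_fps (emb_fps q) = 0"
    "aug_fps (emb_fps r) = 0" "aug_fps (emb_fps s) = 1"
    by (simp_all add: gs aug_mat_def emb_mat_def mat2_one)
  ultimately have "emb_fps p - 1 \<in> fps_filt Sigma_aug 1" "emb_fps q \<in> fps_filt Sigma_aug 1"
    "emb_fps r \<in> fps_filt Sigma_aug 1" "emb_fps s - 1 \<in> fps_filt Sigma_aug 1"
    by (intro filt; simp add: eval1_def aug_fps_diff aug_fps_one)+
  moreover have "emb_mat g - 1 = M2 (emb_fps p - 1) (emb_fps q) (emb_fps r) (emb_fps s - 1)"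
    by (simp add: emb_mat_def gs mat2_one)
  ultimately show ?thesis by (simp add: congruence_subgroup_def)
qed

lemma emb_mat_derived_series: "emb_mat ` derived_series (j + 2) FF \<subseteq> congruence_subgroup Sigma_aug (2 ^ j)"
proof (induction j)
  case 0
  have "derived_series (0 + 2) FF = F2" by (simp add: derived_series_def)
  then show ?case using emb_mat_F2 by auto
next
  case (Suc j)
  have "emb_mat ` derived_series (Suc j + 2) FF \<subseteq> derived (emb_mat ` derived_series (j + 2) FF)"
    unfolding add_Suc derived_series_Suc by (rule image_derived_subset[OF multiplicative_emb_mat])
  also have "\<dots> \<subseteq> derived (congruence_subgroup Sigma_aug (2 ^ j))"
    using Suc.IH by (rule derived_mono)
  also have "\<dots> \<subseteq> congruence_subgroup Sigma_aug (2 ^ Suc j)"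
    using derived_congruence_subgroup[OF Sigma_aug_ideal] by simp
  finally show ?case .
qed

theorem lemma6:
  shows "(\<forall>g \<in> FF. g \<in> derived_series 2 FF \<longleftrightarrow> coeff_mat g 0 = 1)
    \<and> (\<forall>k d g. k > 1 \<longrightarrow> d = 2 ^ (k - 2) \<longrightarrow> g \<in> derived_series k FF \<longrightarrow>
          coeff_mat g 0 = 1
        \<and> (\<forall>i. 1 \<le> i \<and> i < d \<longrightarrow> coeff_mat g i = M2 0 0 0 0)
        \<and> (\<forall>i. d \<le> i \<longrightarrow> mat2_entries (coeff_mat g i) \<subseteq> ideal_pow Sigma_aug d))"
proof (intro conjI allI ballI impI)
  fix g assume "g \<in> FF"
  then show "g \<in> derived_series 2 FF \<longleftrightarrow> coeff_mat g 0 = 1"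
    using at1_F2 at1_eq_one_F2 by (auto simp: derived_series_2 coeff_mat_0)
next
  fix k d :: nat and g
  assume "1 < k" "d = 2 ^ (k - 2)" "g \<in> derived_series k FF"
  moreover have "k = k - 2 + 2" using \<open>1 < k\<close> by simp
  ultimately have M: "emb_mat g \<in> congruence_subgroup Sigma_aug d" and "1 \<le> d"
    using emb_mat_derived_series[of "k - 2"] by (metis image_subset_iff, simp)
  note coeffs = congruence_subgroup_coeffs[OF M \<open>1 \<le> d\<close>, folded coeff_mat_emb_mat]
  show "coeff_mat g 0 = 1" by (rule coeffs(1))
  show "coeff_mat g i = M2 0 0 0 0" if "1 \<le> i \<and> i < d" for i using that coeffs(2) by blast
  show "mat2_entries (coeff_mat g i) \<subseteq> ideal_pow Sigma_aug d" if "d \<le> i" for i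
    using that by (rule coeffs(3))
qed

end
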